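(* Let $E\subset\mathbb R^{n+1}$ be a bounded set satisfying the uniform ball condition (with some radius). Then $$2\|S_E\|_{L^\infty}=\frac1{r_E}\quad\text{and}\quad\frac{|\nu_E(x)-\nu_E(y)|}{|x-y|}\le2\|S_E\|_{L^\infty}\ \text{ for all }x,y\in\partial E,\ x\ne y.$$ If $E$ is moreover $C^2$-regular, then $|H_E|,|B_E|\le2n\|S_E\|_{L^\infty}$ on $\partial E$.
   Context: $E$ satisfies the uniform ball condition with radius $r$ if for every $x\in\partial E$ there are balls $B_r(x_+)\subset\mathbb R^{n+1}\setminus E$, $B_r(x_-)\subset E$ with $x\in\partial B_r(x_+)\cap\partial B_r(x_-)$; $\nu_E$ is the outer unit normal. For $x\ne y$ in $\partial E$, $S_E(x,y)=\frac{(x-y)\cdot\nu_E(x)}{|x-y|^2}$, and $\|S_E\|_{L^\infty}=\sup\{|S_E(x,y)|:x,y\in\partial E,x\ne y\}$. $r_E=\sup\{r>0: d_E\text{ is differentiable in }\mathcal N_r(\partial E)\}$, where $d_E$ is the signed distance to $E$ and $\mathcal N_r(\partial E)=\{x:\mathrm{dist}(x,\partial E)<r\}$. $H_E$ is the mean curvature and $B_E$ the second fundamental form (Frobenius norm). *)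

theory Defs
  imports "HOL-Analysis.Analysis"
begin

text \<open>Ambient space R^(n+1) is an arbitrary euclidean_space 'a, with n = DIM('a) - 1.\<close>

definition uniform_ball :: "'a::euclidean_space set \<Rightarrow> real \<Rightarrow> bool" where
  "uniform_ball E r \<longleftrightarrow>
     (\<forall>x\<in>frontier E. \<exists>xp xm. ball xp r \<subseteq> - E \<and> ball xm r \<subseteq> E
                          \<and> dist x xp = r \<and> dist x xm = r)"

text \<open>nu is an outer unit normal of E at x: E is approximated near x by the half-space
  {y. (y - x) . nu <= 0} (points strictly on the outer side of any cone around nu are
  outside E, points strictly on the inner side are inside E).\<close>
definition is_outer_normal :: "'a::euclidean_space set \<Rightarrow> 'a \<Rightarrow> 'a \<Rightarrow> bool" where
  "is_outer_normal E x \<nu> \<longleftrightarrow> norm \<nu> = 1 \<and>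
     (\<forall>\<epsilon>>0. \<exists>\<delta>>0. \<forall>y\<in>ball x \<delta>.
        ((y - x) \<bullet> \<nu> > \<epsilon> * norm (y - x) \<longrightarrow> y \<notin> E) \<and>
        ((y - x) \<bullet> \<nu> < - \<epsilon> * norm (y - x) \<longrightarrow> y \<in> E))"

definition outer_normal :: "'a::euclidean_space set \<Rightarrow> 'a \<Rightarrow> 'a" where
  "outer_normal E x = (THE \<nu>. is_outer_normal E x \<nu>)"

definition S_kernel :: "'a::euclidean_space set \<Rightarrow> 'a \<Rightarrow> 'a \<Rightarrow> real" where
  "S_kernel E x y = ((x - y) \<bullet> outer_normal E x) / (norm (x - y))\<^sup>2"

definition S_Linf :: "'a::euclidean_space set \<Rightarrow> real" where
  "S_Linf E = Sup {\<bar>S_kernel E x y\<bar> | x y. x \<in> frontier E \<and> y \<in> frontier E \<and> x \<noteq> y}"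

definition signed_dist :: "'a::euclidean_space set \<Rightarrow> 'a \<Rightarrow> real" where
  "signed_dist E x = infdist x E - infdist x (- E)"

definition reach_rE :: "'a::euclidean_space set \<Rightarrow> real" where
  "reach_rE E = Sup {r. r > 0 \<and>
     (\<forall>x. infdist x (frontier E) < r \<longrightarrow> signed_dist E differentiable (at x))}"

definition C2_regular :: "'a::euclidean_space set \<Rightarrow> bool" where
  "C2_regular E \<longleftrightarrow> (\<forall>x\<in>frontier E. \<exists>r>0. \<exists>\<phi> g g'.
      (\<forall>y\<in>ball x r. (\<phi> has_derivative (\<lambda>h. g y \<bullet> h)) (at y)
                   \<and> (g has_derivative g' y) (at y) \<and> g y \<noteq> 0) \<and>
      (\<forall>h. continuous_on (ball x r) (\<lambda>y. g' y h)) \<and>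
      interior E \<inter> ball x r = {y \<in> ball x r. \<phi> y < 0} \<and>
      frontier E \<inter> ball x r = {y \<in> ball x r. \<phi> y = 0})"

text \<open>Differential of the Gauss map along the boundary (Weingarten map); its restriction
  to the tangent space is the second fundamental form.\<close>
definition gauss_diff :: "'a::euclidean_space set \<Rightarrow> 'a \<Rightarrow> 'a \<Rightarrow> 'a" where
  "gauss_diff E x = (SOME L. (outer_normal E has_derivative L) (at x within frontier E))"

definition tang_proj :: "'a::euclidean_space set \<Rightarrow> 'a \<Rightarrow> 'a \<Rightarrow> 'a" where
  "tang_proj E x v = v - (v \<bullet> outer_normal E x) *\<^sub>R outer_normal E x"

text \<open>Mean curvature = trace of the second fundamental form (sum of principal curvatures).\<close>
definition mean_curv :: "'a::euclidean_space set \<Rightarrow> 'a \<Rightarrow> real" where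
  "mean_curv E x = (\<Sum>b\<in>Basis. b \<bullet> gauss_diff E x (tang_proj E x b))"

definition sff_norm :: "'a::euclidean_space set \<Rightarrow> 'a \<Rightarrow> real" where
  "sff_norm E x = sqrt (\<Sum>b\<in>Basis. (norm (gauss_diff E x (tang_proj E x b)))\<^sup>2)"

end

(*
  At a boundary point x the interior and exterior balls of the uniform ball condition are
  antipodal, centred at x -/+ r nu(x). A boundary point y avoids both balls of radius R at x
  exactly when 2 R |(x - y) . nu(x)| <= |x - y|^2, i.e. |S_E(x, y)| <= 1 / (2 R); and if no
  boundary point enters them, connectedness puts these balls on the right sides of the boundary.
  So normal balls exist precisely up to the radius R = 1 / (2 ||S_E||).

  Normal balls of radius R make the signed distance differentiable within distance R of the
  boundary, since there it is squeezed between the distance functions of the two balls.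
  Conversely, differentiability within distance r makes closest points unique there, and an
  invariance of domain argument prolongs the segments realising the distance to length r, so
  that the balls of radius r contain no boundary point. Hence r_E = R.

  Disjointness of the interior ball at x from the exterior ball at y makes nu Lipschitz with
  constant 1 / R; differentiating nu along boundary curves tangent to a vector v then bounds the
  Weingarten map by 1 / R on tangent vectors, which gives the curvature bounds.
*)

theory Submission
  imports Defs
begin

section \<open>Interior and exterior balls along the normal\<close>

lemma dist_ge_if_disjoint_balls:
  fixes a b :: "'a::real_normed_vector"
  assumes "ball a R \<inter> ball b R' = {}" "0 < R" "0 < R'"
  shows "R + R' \<le> dist a b"
proof (rule ccontr)
  assume H: "\<not> R + R' \<le> dist a b"
  define z where "z = a + (R / (R + R')) *\<^sub>R (b - a)"
  have "dist a z = R / (R + R') * dist a b"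
    using assms by (simp add: z_def dist_norm norm_minus_commute)
  also have "\<dots> < R"
    using mult_strict_left_mono[of "dist a b" "R + R'" R] H assms by (simp add: field_simps)
  finally have "z \<in> ball a R" by simp
  have "b - z = (1 - R / (R + R')) *\<^sub>R (b - a)"
    by (simp add: z_def algebra_simps)
  also have "1 - R / (R + R') = R' / (R + R')"
    using assms by (simp add: field_simps)
  finally have "b - z = (R' / (R + R')) *\<^sub>R (b - a)" .
  hence "dist b z = R' / (R + R') * dist a b"
    using assms by (simp add: dist_norm norm_minus_commute)
  also have "\<dots> < R'"
    using mult_strict_left_mono[of "dist a b" "R + R'" R'] H assms by (simp add: field_simps)
  finally have "z \<in> ball b R'" by simp
  with \<open>z \<in> ball a R\<close> assms(1) show False by blast
qed

lemma eq_neg_scaleR_if_norm_diff_ge: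
  fixes a b :: "'a::real_inner"
  assumes "norm a = d" "norm b = R" "d + R \<le> norm (a - b)" "0 < R"
  shows "a = - (d / R) *\<^sub>R b"
proof -
  have d: "0 \<le> d" using assms(1) by auto
  have "(d + R)\<^sup>2 \<le> (norm (a - b))\<^sup>2"
    using assms d by (intro power_mono) auto
  also have "(norm (a - b))\<^sup>2 = (norm a)\<^sup>2 + (norm b)\<^sup>2 - 2 * (a \<bullet> b)"
    by (simp add: power2_norm_eq_inner inner_diff algebra_simps inner_commute)
  finally have "(d + R)\<^sup>2 \<le> d\<^sup>2 + R\<^sup>2 - 2 * (a \<bullet> b)"
    using assms(1,2) by simp
  hence ab: "a \<bullet> b \<le> - d * R" by (simp add: power2_eq_square algebra_simps)
  have "(norm (a + (d / R) *\<^sub>R b))\<^sup>2 = (norm a)\<^sup>2 + 2 * (d / R) * (a \<bullet> b) + (d / R)\<^sup>2 * (norm b)\<^sup>2"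
    unfolding power2_norm_eq_inner
    by (simp add: inner_add_left inner_add_right inner_commute algebra_simps power2_eq_square)
  also have "\<dots> = 2 * d\<^sup>2 + 2 * (d / R) * (a \<bullet> b)"
    using assms by (simp add: power2_eq_square)
  also have "\<dots> \<le> 0"
    using mult_left_mono[OF ab, of "d / R"] d assms by (simp add: power2_eq_square)
  finally have "a + (d / R) *\<^sub>R b = 0" by simp
  thus ?thesis by (simp add: eq_neg_iff_add_eq_0)
qed

text \<open>A point \<open>x + t (n\<^sub>1 - n\<^sub>2)\<close> would lie both in the outer cone of \<open>n\<^sub>1\<close> and in the
  inner cone of \<open>n\<^sub>2\<close>.\<close>
lemma is_outer_normal_unique:
  fixes E :: "'a::euclidean_space set"
  assumes "is_outer_normal E x n1" "is_outer_normal E x n2"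
  shows "n1 = n2"
proof (rule ccontr)
  assume "n1 \<noteq> n2"
  define w where "w = n1 - n2"
  have wpos: "norm w > 0" using \<open>n1 \<noteq> n2\<close> by (simp add: w_def)
  have n1: "n1 \<bullet> n1 = 1" and n2: "n2 \<bullet> n2 = 1"
    using assms by (auto simp: is_outer_normal_def norm_eq_1)
  have nw: "(norm w)\<^sup>2 = 2 - 2 * (n1 \<bullet> n2)"
    using n1 n2 by (simp add: power2_norm_eq_inner w_def inner_diff_left inner_diff_right inner_commute)
  have w1: "w \<bullet> n1 = (norm w)\<^sup>2 / 2"
    using n1 nw by (simp add: w_def inner_diff_left inner_diff_right inner_commute)
  have w2: "w \<bullet> n2 = - ((norm w)\<^sup>2 / 2)"
    using n2 nw by (simp add: w_def inner_diff_left inner_diff_right inner_commute field_simps)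
  define e where "e = norm w / 4"
  have e: "e > 0" using wpos by (simp add: e_def)
  obtain d1 where d1: "d1 > 0" "\<forall>y\<in>ball x d1. (y - x) \<bullet> n1 > e * norm (y - x) \<longrightarrow> y \<notin> E"
    using assms(1) e unfolding is_outer_normal_def by meson
  obtain d2 where d2: "d2 > 0" "\<forall>y\<in>ball x d2. (y - x) \<bullet> n2 < - e * norm (y - x) \<longrightarrow> y \<in> E"
    using assms(2) e unfolding is_outer_normal_def by meson
  define t where "t = min d1 d2 / (2 * norm w)"
  have t: "t > 0" using d1 d2 wpos by (simp add: t_def)
  define y where "y = x + t *\<^sub>R w"
  have ny: "norm (y - x) = t * norm w" using t by (simp add: y_def)
  have "norm (y - x) < d1" "norm (y - x) < d2" using ny wpos d1 d2 by (auto simp: t_def)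
  hence yb: "y \<in> ball x d1" "y \<in> ball x d2" by (auto simp: dist_norm norm_minus_commute)
  have ey: "e * norm (y - x) = t * (norm w)\<^sup>2 / 4" using ny by (simp add: e_def power2_eq_square)
  have pos: "t * (norm w)\<^sup>2 > 0" using t wpos by simp
  have "(y - x) \<bullet> n1 = t * (norm w)\<^sup>2 / 2" using w1 by (simp add: y_def)
  hence "(y - x) \<bullet> n1 > e * norm (y - x)" using ey pos by linarith
  moreover have "(y - x) \<bullet> n2 = - t * (norm w)\<^sup>2 / 2" using w2 by (simp add: y_def)
  hence "(y - x) \<bullet> n2 < - e * norm (y - x)" using ey pos by linarith
  ultimately show False using d1 d2 yb by blast
qed

lemma outer_normal_eqI:
  fixes E :: "'a::euclidean_space set"
  assumes "is_outer_normal E x n"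
  shows "outer_normal E x = n"
  unfolding outer_normal_def using assms is_outer_normal_unique by blast

lemma norm_add_scaleR_unit_sq:
  fixes w n :: "'a::real_inner"
  assumes "norm n = 1"
  shows "(norm (w + c *\<^sub>R n))\<^sup>2 = (norm w)\<^sup>2 + 2 * c * (w \<bullet> n) + c\<^sup>2"
  using assms unfolding power2_norm_eq_inner
  by (simp add: norm_eq_1 inner_add_left inner_add_right inner_commute algebra_simps power2_eq_square)

lemma is_outer_normal_if_tangent_balls:
  fixes E :: "'a::euclidean_space set"
  assumes n: "norm n = 1" and R: "0 < R"
    and out: "ball (x + R *\<^sub>R n) R \<subseteq> - E" and inn: "ball (x - R *\<^sub>R n) R \<subseteq> E"
  shows "is_outer_normal E x n"
  unfolding is_outer_normal_def
proof (intro conjI allI impI)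
  fix e :: real assume e: "e > 0"
  show "\<exists>d>0. \<forall>y\<in>ball x d. (e * norm (y - x) < (y - x) \<bullet> n \<longrightarrow> y \<notin> E) \<and>
           ((y - x) \<bullet> n < - e * norm (y - x) \<longrightarrow> y \<in> E)"
  proof (intro exI[of _ "2 * R * e"] conjI ballI impI)
    fix y assume "y \<in> ball x (2 * R * e)"
    hence "norm (y - x) < 2 * R * e" by (simp add: dist_norm norm_minus_commute)
    hence small: "(norm (y - x))\<^sup>2 \<le> 2 * R * e * norm (y - x)"
      by (simp add: power2_eq_square mult_right_mono)
    have in_ball: "y \<in> ball (x + c *\<^sub>R n) R" if "(norm (y - x))\<^sup>2 - 2 * c * ((y - x) \<bullet> n) < 0"
      and "c\<^sup>2 = R\<^sup>2" for c
    proof -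
      have "(norm ((y - x) + (- c) *\<^sub>R n))\<^sup>2 < R\<^sup>2"
        unfolding norm_add_scaleR_unit_sq[OF n] using that by simp
      hence "norm ((y - x) + (- c) *\<^sub>R n) < R"
        using R by (meson less_imp_le power2_less_imp_less)
      thus ?thesis by (simp add: dist_norm norm_minus_commute diff_diff_eq)
    qed
    {
      assume "e * norm (y - x) < (y - x) \<bullet> n"
      hence "(norm (y - x))\<^sup>2 - 2 * R * ((y - x) \<bullet> n) < 0"
        using small mult_strict_left_mono[of "e * norm (y - x)" "(y - x) \<bullet> n" "2 * R"] R
        by (simp add: algebra_simps)
      thus "y \<notin> E" using in_ball[of R] out by auto
    }
    {
      assume "(y - x) \<bullet> n < - e * norm (y - x)"
      hence "(norm (y - x))\<^sup>2 - 2 * (- R) * ((y - x) \<bullet> n) < 0"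
        using small mult_strict_left_mono[of "(y - x) \<bullet> n" "- e * norm (y - x)" "2 * R"] R
        by (simp add: algebra_simps)
      thus "y \<in> E" using in_ball[of "- R"] inn by auto
    }
  qed (use e R in simp)
qed (fact n)

definition normal_balls :: "'a::euclidean_space set \<Rightarrow> real \<Rightarrow> bool" where
  "normal_balls E R \<longleftrightarrow> (\<forall>x\<in>frontier E. norm (outer_normal E x) = 1 \<and>
      ball (x + R *\<^sub>R outer_normal E x) R \<subseteq> - E \<and> ball (x - R *\<^sub>R outer_normal E x) R \<subseteq> E)"

lemma normal_ballsD:
  assumes "normal_balls E R" "x \<in> frontier E"
  shows "norm (outer_normal E x) = 1" "ball (x + R *\<^sub>R outer_normal E x) R \<subseteq> - E"
    "ball (x - R *\<^sub>R outer_normal E x) R \<subseteq> E"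
  using assms by (auto simp: normal_balls_def)

text \<open>The two balls touching at a boundary point are disjoint, hence diametrically opposite;
  their common axis is then the outer normal.\<close>
lemma uniform_ball_imp_normal_balls:
  fixes E :: "'a::euclidean_space set"
  assumes "uniform_ball E R" "R > 0"
  shows "normal_balls E R"
  unfolding normal_balls_def
proof
  fix x assume "x \<in> frontier E"
  then obtain xp xm where b: "ball xp R \<subseteq> - E" "ball xm R \<subseteq> E" "dist x xp = R" "dist x xm = R"
    using assms(1) unfolding uniform_ball_def by blast
  have "ball xp R \<inter> ball xm R = {}" using b by blast
  hence "R + R \<le> dist xp xm" using dist_ge_if_disjoint_balls assms(2) by blast
  hence "xp - x = - (R / R) *\<^sub>R (xm - x)"
    using b assms(2) by (intro eq_neg_scaleR_if_norm_diff_ge) (auto simp: dist_norm norm_minus_commute)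
  hence xm: "xm = x - (xp - x)" using assms(2) by (simp add: algebra_simps)
  define n where "n = (1 / R) *\<^sub>R (xp - x)"
  have n: "norm n = 1" using b(3) assms(2) by (simp add: n_def dist_norm norm_minus_commute)
  have p: "x + R *\<^sub>R n = xp" and m: "x - R *\<^sub>R n = xm" using assms(2) xm by (simp_all add: n_def)
  have "outer_normal E x = n"
    using is_outer_normal_if_tangent_balls[OF n assms(2)] p m b by (simp add: outer_normal_eqI)
  thus "norm (outer_normal E x) = 1 \<and> ball (x + R *\<^sub>R outer_normal E x) R \<subseteq> - E \<and>
      ball (x - R *\<^sub>R outer_normal E x) R \<subseteq> E" using n p m b by simp
qed

lemma frontier_disjoint_normal_balls:
  fixes E :: "'a::euclidean_space set"
  assumes "normal_balls E R" "x \<in> frontier E" "y \<in> frontier E"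
  shows "y \<notin> ball (x + R *\<^sub>R outer_normal E x) R" "y \<notin> ball (x - R *\<^sub>R outer_normal E x) R"
proof -
  have "ball (x + R *\<^sub>R outer_normal E x) R \<inter> closure E = {}"
    using normal_ballsD(2)[OF assms(1,2)] open_Int_closure_eq_empty by blast
  thus "y \<notin> ball (x + R *\<^sub>R outer_normal E x) R"
    using assms(3) by (auto simp: frontier_def)
  have "ball (x - R *\<^sub>R outer_normal E x) R \<subseteq> interior E"
    using normal_ballsD(3)[OF assms(1,2)] by (simp add: interior_maximal)
  thus "y \<notin> ball (x - R *\<^sub>R outer_normal E x) R"
    using assms(3) by (auto simp: frontier_def)
qed

text \<open>The inequality \<open>2 R \<bar>(x - y) \<bullet> \<nu>(x)\<bar> \<le> \<bar>x - y\<bar>\<^sup>2\<close> says exactly that \<open>y\<close> lies outside both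
  balls of radius \<open>R\<close> tangent to the boundary at \<open>x\<close>, i.e. \<open>\<bar>S_kernel E x y\<bar> \<le> 1 / (2 R)\<close>.\<close>
lemma normal_balls_imp_kernel_bound:
  fixes E :: "'a::euclidean_space set"
  assumes "normal_balls E R" "R > 0" "x \<in> frontier E" "y \<in> frontier E"
  shows "2 * R * \<bar>(x - y) \<bullet> outer_normal E x\<bar> \<le> (norm (x - y))\<^sup>2"
proof -
  define n where "n = outer_normal E x"
  have n: "norm n = 1" using normal_ballsD(1)[OF assms(1,3)] by (simp add: n_def)
  have outside: "R\<^sup>2 \<le> (norm ((x - y) + c *\<^sub>R n))\<^sup>2" if "c = R \<or> c = - R" for c
  proof -
    have "R \<le> norm ((x - y) + c *\<^sub>R n)"
      using frontier_disjoint_normal_balls[OF assms(1,3,4)] that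
      by (auto simp: n_def dist_norm algebra_simps not_less)
    thus ?thesis using assms(2) by (intro power_mono) auto
  qed
  have "0 \<le> (norm (x - y))\<^sup>2 + 2 * R * ((x - y) \<bullet> n)" "0 \<le> (norm (x - y))\<^sup>2 - 2 * R * ((x - y) \<bullet> n)"
    using outside[of R] outside[of "- R"] unfolding norm_add_scaleR_unit_sq[OF n] by simp_all
  thus ?thesis by (simp add: n_def abs_if)
qed

lemma frontier_disjoint_ball_if_kernel_bound:
  fixes E :: "'a::euclidean_space set"
  assumes n: "norm (outer_normal E x) = 1" and R: "R > 0" and c: "c = R \<or> c = - R"
    and bound: "\<And>y. y \<in> frontier E \<Longrightarrow> 2 * R * \<bar>(x - y) \<bullet> outer_normal E x\<bar> \<le> (norm (x - y))\<^sup>2"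
  shows "ball (x + c *\<^sub>R outer_normal E x) R \<inter> frontier E = {}"
proof (rule ccontr)
  define n where "n = outer_normal E x"
  assume "ball (x + c *\<^sub>R outer_normal E x) R \<inter> frontier E \<noteq> {}"
  then obtain y where y: "y \<in> frontier E" "norm ((x - y) + c *\<^sub>R n) < R"
    by (auto simp: n_def dist_norm algebra_simps)
  hence "(norm ((x - y) + c *\<^sub>R n))\<^sup>2 < R\<^sup>2" using R by (simp add: power_strict_mono)
  hence "(norm (x - y))\<^sup>2 + 2 * c * ((x - y) \<bullet> n) < 0"
    using c unfolding norm_add_scaleR_unit_sq[OF n[folded n_def]] by auto
  moreover have "\<bar>2 * c * ((x - y) \<bullet> n)\<bar> = 2 * R * \<bar>(x - y) \<bullet> n\<bar>"
    using c R by (auto simp: abs_mult)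
  moreover have "2 * R * \<bar>(x - y) \<bullet> n\<bar> \<le> (norm (x - y))\<^sup>2"
    using bound[OF y(1)] by (simp add: n_def)
  ultimately show False by linarith
qed

text \<open>Conversely, the kernel bound enlarges given normal balls to radius \<open>R\<close>: the enlarged balls
  do not meet the boundary, and being connected they stay on the side of the small ones.\<close>
lemma normal_balls_if_kernel_bound:
  fixes E :: "'a::euclidean_space set"
  assumes balls: "normal_balls E r" and r: "r > 0" and R: "R > 0"
    and bound: "\<And>x y. x \<in> frontier E \<Longrightarrow> y \<in> frontier E \<Longrightarrow>
              2 * R * \<bar>(x - y) \<bullet> outer_normal E x\<bar> \<le> (norm (x - y))\<^sup>2"
  shows "normal_balls E R"
  unfolding normal_balls_def
proof (intro ballI conjI)
  fix x assume x: "x \<in> frontier E"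
  define n where "n = outer_normal E x"
  have n: "norm n = 1" using normal_ballsD(1)[OF balls x] by (simp add: n_def)
  then show "norm (outer_normal E x) = 1" by (simp add: n_def)
  have no_frontier: "ball (x + c *\<^sub>R n) R \<inter> frontier E = {}" if "c = R \<or> c = - R" for c
    using frontier_disjoint_ball_if_kernel_bound[OF _ R that bound[OF x]] n by (simp add: n_def)
  have dist_on_normal: "dist (x + c *\<^sub>R n) (x + s *\<^sub>R n) = \<bar>c - s\<bar>" for c s
    using n by (simp add: dist_norm flip: scaleR_diff_left)
  define t where "t = min r R"
  have t: "0 < t" "t \<le> r" "t \<le> R" using r R by (auto simp: t_def)
  have "x + t *\<^sub>R n \<in> ball (x + R *\<^sub>R n) R" "x + t *\<^sub>R n \<in> ball (x + r *\<^sub>R n) r"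
    using dist_on_normal[of R t] dist_on_normal[of r t] t n by simp_all
  hence "ball (x + R *\<^sub>R n) R - E \<noteq> {}"
    using normal_ballsD(2)[OF balls x, folded n_def] by blast
  hence "ball (x + R *\<^sub>R n) R \<inter> E = {}"
    using connected_Int_frontier[OF connected_ball] no_frontier[of R] by blast
  thus "ball (x + R *\<^sub>R outer_normal E x) R \<subseteq> - E" by (auto simp: n_def)
  have "x - t *\<^sub>R n \<in> ball (x - R *\<^sub>R n) R" "x - t *\<^sub>R n \<in> ball (x - r *\<^sub>R n) r"
    using dist_on_normal[of "- R" "- t"] dist_on_normal[of "- r" "- t"] t n by simp_all
  hence "ball (x - R *\<^sub>R n) R \<inter> E \<noteq> {}"
    using normal_ballsD(3)[OF balls x, folded n_def] by blast
  moreover have "ball (x - R *\<^sub>R n) R \<inter> frontier E = {}"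
    using no_frontier[of "- R"] by simp
  ultimately have "ball (x - R *\<^sub>R n) R - E = {}"
    using connected_Int_frontier[OF connected_ball] by blast
  thus "ball (x - R *\<^sub>R outer_normal E x) R \<subseteq> E" by (auto simp: n_def)
qed

text \<open>The interior ball at \<open>x\<close> and the exterior ball at \<open>y\<close> are disjoint, and so are the
  exterior ball at \<open>x\<close> and the interior ball at \<open>y\<close>; adding the two resulting distance
  estimates (parallelogram law) gives the Lipschitz bound.\<close>
lemma normal_balls_imp_outer_normal_lipschitz:
  fixes E :: "'a::euclidean_space set"
  assumes balls: "normal_balls E R" and R: "R > 0" and x: "x \<in> frontier E" and y: "y \<in> frontier E"
  shows "R * norm (outer_normal E x - outer_normal E y) \<le> norm (x - y)"
proof -
  define nx where "nx = outer_normal E x"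
  define ny where "ny = outer_normal E y"
  note balls_x = normal_ballsD[OF balls x, folded nx_def]
  note balls_y = normal_ballsD[OF balls y, folded ny_def]
  define s where "s = nx + ny"
  have "ball (x - R *\<^sub>R nx) R \<inter> ball (y + R *\<^sub>R ny) R = {}"
    "ball (x + R *\<^sub>R nx) R \<inter> ball (y - R *\<^sub>R ny) R = {}"
    using balls_x balls_y by blast+
  hence "R + R \<le> dist (x - R *\<^sub>R nx) (y + R *\<^sub>R ny)" "R + R \<le> dist (x + R *\<^sub>R nx) (y - R *\<^sub>R ny)"
    using R by (meson dist_ge_if_disjoint_balls)+
  moreover have "dist (x - R *\<^sub>R nx) (y + R *\<^sub>R ny) = norm ((x - y) - R *\<^sub>R s)"
    "dist (x + R *\<^sub>R nx) (y - R *\<^sub>R ny) = norm ((x - y) + R *\<^sub>R s)"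
    by (simp_all add: s_def dist_norm algebra_simps)
  ultimately have minus: "2 * R \<le> norm ((x - y) - R *\<^sub>R s)" and plus: "2 * R \<le> norm ((x - y) + R *\<^sub>R s)"
    by simp_all
  have "2 * (2 * R)\<^sup>2 \<le> (norm ((x - y) - R *\<^sub>R s))\<^sup>2 + (norm ((x - y) + R *\<^sub>R s))\<^sup>2"
    using power_mono[OF minus, of 2] power_mono[OF plus, of 2] R by simp
  also have "\<dots> = 2 * (norm (x - y))\<^sup>2 + 2 * R\<^sup>2 * (s \<bullet> s)"
    unfolding power2_norm_eq_inner
    by (simp add: inner_add_left inner_add_right inner_diff_left inner_diff_right inner_commute
        algebra_simps power2_eq_square)
  also have "\<dots> = 2 * (norm (x - y))\<^sup>2 + 2 * R\<^sup>2 * (4 - (norm (nx - ny))\<^sup>2)"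
    using balls_x(1) balls_y(1) unfolding power2_norm_eq_inner
    by (simp add: s_def inner_add_left inner_add_right inner_diff_left inner_diff_right inner_commute norm_eq_1)
  finally have "(R * norm (nx - ny))\<^sup>2 \<le> (norm (x - y))\<^sup>2"
    by (simp add: power2_eq_square algebra_simps)
  hence "R * norm (nx - ny) \<le> norm (x - y)"
    using R by (meson norm_ge_zero power2_le_imp_le)
  thus ?thesis by (simp add: nx_def ny_def)
qed

section \<open>Normal balls make the signed distance differentiable\<close>

lemma infdist_geI:
  assumes "A \<noteq> {}" "\<And>a. a \<in> A \<Longrightarrow> b \<le> dist x a"
  shows "b \<le> infdist x A"
  using assms by (simp add: infdist_notempty cINF_greatest)

lemma infdist_closure [simp]: "infdist x (closure A) = infdist x A"
  by (simp add: infdist_eq_setdist)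

lemma signed_dist_Compl: "signed_dist (- F) y = - signed_dist F y"
  by (simp add: signed_dist_def)

lemma signed_dist_ge_if_ball_outside:
  fixes F :: "'a::euclidean_space set"
  assumes "ball c R \<subseteq> - F" "F \<noteq> {}" "R > 0"
  shows "R - dist y c \<le> signed_dist F y"
proof (cases "dist y c < R")
  case True
  hence "infdist y (- F) = 0" using assms(1) by (auto simp: dist_commute)
  moreover have "R - dist y c \<le> infdist y F"
  proof (rule infdist_geI[OF assms(2)])
    fix a assume "a \<in> F"
    hence "R \<le> dist c a" using assms(1) by (auto simp: subset_eq not_less)
    thus "R - dist y c \<le> dist y a" using dist_triangle[of c a y] by (simp add: dist_commute)
  qed
  ultimately show ?thesis by (simp add: signed_dist_def)
next
  case False
  hence yc: "y \<noteq> c" "dist y c \<ge> R" using assms(3) by auto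
  define q where "q = c + (R / dist y c) *\<^sub>R (y - c)"
  have "q \<in> cball c R" using yc assms(3) by (simp add: q_def dist_norm)
  also have "cball c R = closure (ball c R)" using assms(3) by simp
  also have "\<dots> \<subseteq> closure (- F)" using assms(1) by (rule closure_mono)
  finally have q: "q \<in> closure (- F)" .
  have "y - q = (1 - R / dist y c) *\<^sub>R (y - c)" by (simp add: q_def algebra_simps)
  hence "dist y q = (1 - R / dist y c) * dist y c" using yc by (simp add: dist_norm)
  also have "\<dots> = dist y c - R" using yc by (simp add: field_simps)
  finally have "infdist y (- F) \<le> dist y c - R"
    using infdist_le[OF q, of y] by simp
  thus ?thesis using infdist_nonneg[of y F] by (simp add: signed_dist_def)
qed

lemma has_derivative_squeeze:
  fixes f g h :: "'a::real_normed_vector \<Rightarrow> real"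
  assumes "\<And>y. f y \<le> g y" "\<And>y. g y \<le> h y" "f x = g x" "h x = g x"
    and "(f has_derivative D) (at x)" "(h has_derivative D) (at x)"
  shows "(g has_derivative D) (at x)"
  unfolding has_derivative_at_alt
proof (intro conjI allI impI)
  show "bounded_linear D" using assms(5) by (simp add: has_derivative_at_alt)
  fix e :: real assume e: "e > 0"
  obtain d1 where d1: "d1 > 0" "\<forall>y. norm (y - x) < d1 \<longrightarrow> norm (f y - f x - D (y - x)) \<le> e * norm (y - x)"
    using assms(5) e unfolding has_derivative_at_alt by blast
  obtain d2 where d2: "d2 > 0" "\<forall>y. norm (y - x) < d2 \<longrightarrow> norm (h y - h x - D (y - x)) \<le> e * norm (y - x)"
    using assms(6) e unfolding has_derivative_at_alt by blast
  show "\<exists>d>0. \<forall>y. norm (y - x) < d \<longrightarrow> norm (g y - g x - D (y - x)) \<le> e * norm (y - x)"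
  proof (intro exI[of _ "min d1 d2"] conjI allI impI)
    fix y assume "norm (y - x) < min d1 d2"
    hence "\<bar>f y - f x - D (y - x)\<bar> \<le> e * norm (y - x)" "\<bar>h y - h x - D (y - x)\<bar> \<le> e * norm (y - x)"
      using d1 d2 by auto
    thus "norm (g y - g x - D (y - x)) \<le> e * norm (y - x)"
      using assms(1,2)[of y] assms(3,4) by (simp add: abs_le_iff)
  qed (use d1 d2 in simp)
qed

lemma has_derivative_dist_left:
  fixes c x :: "'a::real_inner"
  assumes "x \<noteq> c"
  shows "((\<lambda>y. dist y c) has_derivative (\<lambda>h. h \<bullet> sgn (x - c))) (at x)"
proof -
  have "((\<lambda>y. y - c) has_derivative (\<lambda>h. h)) (at x)"
    by (auto intro!: derivative_eq_intros)
  moreover have "(norm has_derivative (\<lambda>h. h \<bullet> sgn (x - c))) (at (x - c))"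
    using has_derivative_norm[of "x - c"] assms by simp
  ultimately show ?thesis
    using has_derivative_compose by (fastforce simp: dist_norm)
qed

text \<open>Along the normal line through a boundary point, the signed distance is squeezed between
  the distance functions of the two normal balls, which are smooth there with the same gradient.\<close>
lemma signed_dist_has_derivative_on_normal:
  fixes E :: "'a::euclidean_space set"
  assumes balls: "normal_balls E R" and R: "R > 0" and p: "p \<in> frontier E" and t: "\<bar>t\<bar> < R"
  shows "(signed_dist E has_derivative (\<lambda>h. h \<bullet> outer_normal E p)) (at (p + t *\<^sub>R outer_normal E p))"
proof -
  define n where "n = outer_normal E p"
  note b = normal_ballsD[OF balls p, folded n_def]
  have ne: "E \<noteq> {}" "- E \<noteq> {}"
    using p by (auto, cases "E = UNIV") auto
  define x where "x = p + t *\<^sub>R n"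
  define c where "c = p + R *\<^sub>R n"
  define c' where "c' = p - R *\<^sub>R n"
  have xc: "x - c = (t - R) *\<^sub>R n" and xc': "x - c' = (t + R) *\<^sub>R n"
    by (simp_all add: x_def c_def c'_def algebra_simps)
  have dc: "dist x c = R - t" and dc': "dist x c' = R + t"
    using xc xc' t b(1) by (simp_all add: dist_norm)
  have "inverse (R - t) * (t - R) = -1" using t by (simp add: field_simps)
  hence "sgn (x - c) = - n" and "sgn (x - c') = n"
    using xc xc' t b(1) by (simp_all add: sgn_scaleR sgn_if sgn_div_norm)
  moreover have "x \<noteq> c" "x \<noteq> c'" using dc dc' t by auto
  ultimately have lower: "((\<lambda>y. R - dist y c) has_derivative (\<lambda>h. h \<bullet> n)) (at x)"
    and upper: "((\<lambda>y. dist y c' - R) has_derivative (\<lambda>h. h \<bullet> n)) (at x)"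
    using has_derivative_dist_left[of x c] has_derivative_dist_left[of x c']
    by (auto intro!: derivative_eq_intros)
  have ge: "R - dist y c \<le> signed_dist E y" for y
    using signed_dist_ge_if_ball_outside[OF b(2)[folded c_def] ne(1) R] .
  have le: "signed_dist E y \<le> dist y c' - R" for y
    using signed_dist_ge_if_ball_outside[of c' R "- E" y] b(3) ne(2) R
    by (simp add: c'_def signed_dist_Compl)
  have "signed_dist E x = t" using ge[of x] le[of x] dc dc' by simp
  hence "(signed_dist E has_derivative (\<lambda>h. h \<bullet> n)) (at x)"
    using dc dc' by (intro has_derivative_squeeze[OF ge le _ _ lower upper]) auto
  thus ?thesis by (simp add: x_def n_def)
qed

lemma closest_point_in_frontier:
  fixes F :: "'a::euclidean_space set"
  assumes "x \<notin> closure F" "p \<in> closure F" "\<And>y. y \<in> closure F \<Longrightarrow> dist x p \<le> dist x y"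
  shows "p \<in> frontier F"
proof -
  define d where "d = dist x p"
  have d: "d > 0" using assms(1,2) by (auto simp: d_def)
  have "p \<in> closure (- F)"
    unfolding closure_approachable
  proof (intro allI impI)
    fix e :: real assume e: "e > 0"
    define l where "l = min 1 (e / (2 * d))"
    have l: "0 < l" "l \<le> 1" "l * d < e" using e d by (auto simp: l_def min_def field_simps)
    define y where "y = p + l *\<^sub>R (x - p)"
    have "x - y = (1 - l) *\<^sub>R (x - p)" by (simp add: y_def algebra_simps)
    hence "dist x y < d" using l d by (simp add: d_def dist_norm)
    hence "y \<in> - F" using assms(3)[of y] closure_subset by (force simp: d_def)
    moreover have "dist y p < e" using l by (simp add: y_def d_def dist_norm norm_minus_commute)
    ultimately show "\<exists>y\<in>- F. dist y p < e" by blast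
  qed
  thus ?thesis using assms(2) by (simp add: frontier_closures)
qed

text \<open>An outside point \<open>x\<close> and its closest point \<open>p\<close> of \<open>F\<close> span a ball around \<open>x\<close> avoiding \<open>F\<close>,
  which touches the interior ball at \<open>p\<close>; so \<open>x\<close> lies on the normal line at \<open>p\<close>.\<close>
lemma outside_point_on_normal_line:
  fixes F :: "'a::euclidean_space set"
  assumes inner: "\<forall>p\<in>frontier F. norm (u p) = 1 \<and> ball (p - R *\<^sub>R u p) R \<subseteq> F"
    and R: "R > 0" and x: "x \<notin> closure F" and xd: "infdist x (frontier F) < R" and ne: "F \<noteq> {}"
  obtains p d where "p \<in> frontier F" "0 < d" "d < R" "x = p + d *\<^sub>R u p"
proof -
  obtain p where p: "p \<in> closure F" "\<And>y. y \<in> closure F \<Longrightarrow> dist x p \<le> dist x y"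
    using distance_attains_inf[of "closure F" x] ne by auto
  define d where "d = dist x p"
  have d: "d > 0" using x p by (auto simp: d_def)
  have pf: "p \<in> frontier F" using closest_point_in_frontier[OF x p] .
  have "d \<le> infdist x (frontier F)"
    using p pf by (intro infdist_geI) (auto simp: d_def frontier_def)
  hence dR: "d < R" using xd by simp
  have up: "norm (u p) = 1" and bF: "ball (p - R *\<^sub>R u p) R \<subseteq> F" using inner pf by auto
  have "ball x d \<inter> F = {}"
    using p(2) closure_subset by (force simp: d_def)
  hence "ball x d \<inter> ball (p - R *\<^sub>R u p) R = {}" using bF by blast
  hence "d + R \<le> dist x (p - R *\<^sub>R u p)" using dist_ge_if_disjoint_balls d R by blast
  hence "x - p = - (d / R) *\<^sub>R ((p - R *\<^sub>R u p) - p)"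
    using up R by (intro eq_neg_scaleR_if_norm_diff_ge) (auto simp: d_def dist_norm algebra_simps)
  hence "x = p + d *\<^sub>R u p" using R by (simp add: algebra_simps)
  with pf d dR that show ?thesis by blast
qed

lemma normal_balls_imp_signed_dist_differentiable:
  fixes E :: "'a::euclidean_space set"
  assumes balls: "normal_balls E R" and R: "R > 0" and ne: "E \<noteq> {}" "- E \<noteq> {}"
    and x: "infdist x (frontier E) < R"
  shows "signed_dist E differentiable (at x)"
proof -
  have "\<exists>p t. p \<in> frontier E \<and> \<bar>t\<bar> < R \<and> x = p + t *\<^sub>R outer_normal E p"
  proof (cases "x \<in> closure E")
    case False
    moreover have "\<forall>p\<in>frontier E. norm (outer_normal E p) = 1 \<and> ball (p - R *\<^sub>R outer_normal E p) R \<subseteq> E"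
      using normal_ballsD[OF balls] by blast
    ultimately obtain p d where "p \<in> frontier E" "0 < d" "d < R" "x = p + d *\<^sub>R outer_normal E p"
      using outside_point_on_normal_line R x ne(1) by blast
    thus ?thesis by (intro exI[of _ p] exI[of _ d]) auto
  next
    case True
    show ?thesis
    proof (cases "x \<in> frontier E")
      case True
      thus ?thesis using R by (intro exI[of _ x] exI[of _ 0]) simp
    next
      case False
      with \<open>x \<in> closure E\<close> have "x \<notin> closure (- E)" by (simp add: frontier_closures)
      moreover have "\<forall>p\<in>frontier (- E). norm (- outer_normal E p) = 1 \<and>
          ball (p - R *\<^sub>R (- outer_normal E p)) R \<subseteq> - E"
        using normal_ballsD[OF balls] by simp
      moreover have "infdist x (frontier (- E)) < R" using x by simp
      ultimately obtain p d where "p \<in> frontier (- E)" "0 < d" "d < R"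
        "x = p + d *\<^sub>R (- outer_normal E p)"
        using outside_point_on_normal_line[of "- E" "\<lambda>p. - outer_normal E p" R x] R ne(2) by blast
      thus ?thesis by (intro exI[of _ p] exI[of _ "- d"]) auto
    qed
  qed
  then obtain p t where "p \<in> frontier E" "\<bar>t\<bar> < R" "x = p + t *\<^sub>R outer_normal E p" by blast
  thus ?thesis
    using signed_dist_has_derivative_on_normal[OF balls R] unfolding differentiable_def by blast
qed

section \<open>Differentiability of the signed distance forces normal balls\<close>

lemma dist_closest_point_eq_infdist:
  fixes K :: "'a::euclidean_space set"
  assumes "closed K" "K \<noteq> {}"
  shows "dist a (closest_point K a) = infdist a K"
  using closest_point_exists[OF assms] infdist_le[OF closest_point_in_set[OF assms]]
  by (intro antisym infdist_geI[OF assms(2)]) auto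

text \<open>Where the closest point \<open>p\<^sub>0\<close> of \<open>w\<^sub>0\<close> is unique, points of \<open>K\<close> away from \<open>p\<^sub>0\<close> are
  uniformly farther from \<open>w\<^sub>0\<close> than \<open>infdist w\<^sub>0 K\<close> (by compactness of their near part).\<close>
lemma closest_point_gap:
  fixes K :: "'a::euclidean_space set"
  assumes K: "closed K" "K \<noteq> {}" and e: "e > 0"
    and unique: "\<And>p. p \<in> K \<Longrightarrow> dist w0 p = infdist w0 K \<Longrightarrow> p = closest_point K w0"
  obtains m where "infdist w0 K < m" "\<And>p. p \<in> K \<Longrightarrow> e \<le> dist p (closest_point K w0) \<Longrightarrow> m \<le> dist w0 p"
proof -
  define d0 where "d0 = infdist w0 K"
  define C where "C = K \<inter> cball w0 (d0 + 1) \<inter> {p. e \<le> dist p (closest_point K w0)}"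
  show ?thesis
  proof (cases "C = {}")
    case True
    thus ?thesis by (intro that[of "d0 + 1"]) (auto simp: C_def d0_def not_le)
  next
    case False
    have "closed {p. e \<le> dist p (closest_point K w0)}"
      by (rule closed_Collect_le) (auto intro!: continuous_intros)
    hence "compact C" using K by (auto simp: C_def compact_eq_bounded_closed intro: bounded_subset[OF bounded_cball])
    moreover have "continuous_on C (dist w0)" by (intro continuous_intros)
    ultimately obtain p1 where p1: "p1 \<in> C" "\<And>p. p \<in> C \<Longrightarrow> dist w0 p1 \<le> dist w0 p"
      using continuous_attains_inf[OF _ False] by blast
    have "p1 \<in> K" "e \<le> dist p1 (closest_point K w0)" using p1 by (auto simp: C_def)
    hence "dist w0 p1 \<noteq> d0" using unique[of p1] e by (auto simp: d0_def)
    moreover have "d0 \<le> dist w0 p1" using infdist_le[OF \<open>p1 \<in> K\<close>] by (simp add: d0_def)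
    ultimately have "d0 < dist w0 p1" by simp
    show ?thesis
    proof (rule that[of "min (dist w0 p1) (d0 + 1)"])
      show "infdist w0 K < min (dist w0 p1) (d0 + 1)" using \<open>d0 < dist w0 p1\<close> by (simp add: d0_def)
      fix p assume p: "p \<in> K" "e \<le> dist p (closest_point K w0)"
      show "min (dist w0 p1) (d0 + 1) \<le> dist w0 p"
      proof (cases "dist w0 p \<le> d0 + 1")
        case True
        thus ?thesis using p1(2)[of p] p by (simp add: C_def)
      qed simp
    qed
  qed
qed

lemma isCont_closest_point:
  fixes K :: "'a::euclidean_space set"
  assumes K: "closed K" "K \<noteq> {}"
    and unique: "\<And>p. p \<in> K \<Longrightarrow> dist w0 p = infdist w0 K \<Longrightarrow> p = closest_point K w0"
  shows "isCont (closest_point K) w0"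
  unfolding continuous_at_eps_delta
proof (intro allI impI)
  fix e :: real assume "e > 0"
  then obtain m where m: "infdist w0 K < m"
    "\<And>p. p \<in> K \<Longrightarrow> e \<le> dist p (closest_point K w0) \<Longrightarrow> m \<le> dist w0 p"
    using closest_point_gap[OF K _ unique] by blast
  show "\<exists>\<delta>>0. \<forall>w. dist w w0 < \<delta> \<longrightarrow> dist (closest_point K w) (closest_point K w0) < e"
  proof (intro exI[of _ "(m - infdist w0 K) / 2"] conjI allI impI)
    fix w assume w: "dist w w0 < (m - infdist w0 K) / 2"
    have "dist w0 (closest_point K w) \<le> dist w0 w + infdist w K"
      using dist_triangle[of w0 "closest_point K w" w] dist_closest_point_eq_infdist[OF K, of w] by simp
    also have "\<dots> \<le> infdist w0 K + 2 * dist w w0"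
      using infdist_triangle[of w K w0] by (simp add: dist_commute)
    also have "\<dots> < m" using w by simp
    finally show "dist (closest_point K w) (closest_point K w0) < e"
      using m(2)[OF closest_point_in_set[OF K, of w]] by force
  qed (use m in simp)
qed

lemma infdist_toward_closest:
  fixes K :: "'a::euclidean_space set"
  assumes p: "p \<in> K" "dist w p = infdist w K" and pos: "0 < infdist w K"
    and e: "0 \<le> e" "e \<le> infdist w K"
  defines "q \<equiv> w - (e / infdist w K) *\<^sub>R (w - p)"
  shows "dist q p = infdist w K - e" and "infdist q K = infdist w K - e"
proof -
  define d where "d = infdist w K"
  have "q - p = (1 - e / d) *\<^sub>R (w - p)" by (simp add: q_def d_def algebra_simps)
  moreover have "1 - e / d \<ge> 0" using e pos by (simp add: d_def field_simps)
  ultimately have "dist q p = (1 - e / d) * d" using p by (simp add: dist_norm d_def)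
  also have "\<dots> = d - e" using pos by (simp add: d_def field_simps)
  finally show qp: "dist q p = infdist w K - e" by (simp add: d_def)
  have wq: "dist w q = e" using e pos p by (simp add: q_def dist_norm norm_minus_commute)
  have "d - e \<le> infdist q K"
  proof (rule infdist_geI)
    fix k assume "k \<in> K"
    hence "d \<le> dist w k" using infdist_le by (auto simp: d_def)
    thus "d - e \<le> dist q k" using dist_triangle[of w k q] wq by simp
  qed (use p in auto)
  moreover have "infdist q K \<le> d - e" using infdist_le[OF p(1), of q] qp by (simp add: d_def)
  ultimately show "infdist q K = infdist w K - e" by (simp add: d_def)
qed

definition unique_closest_within :: "'a::euclidean_space set \<Rightarrow> real \<Rightarrow> bool" where
  "unique_closest_within K r \<longleftrightarrow> (\<forall>z p. 0 < infdist z K \<longrightarrow> infdist z K < r \<longrightarrow> p \<in> K \<longrightarrow>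
     dist z p = infdist z K \<longrightarrow> p = closest_point K z)"

lemma unique_closest_withinD:
  assumes "unique_closest_within K r" "0 < infdist z K" "infdist z K < r" "p \<in> K" "dist z p = infdist z K"
  shows "p = closest_point K z"
  using assms unfolding unique_closest_within_def by blast

text \<open>Moving every point of \<open>{e < infdist w K < r}\<close> the distance \<open>e\<close> towards its closest point is
  continuous and, by uniqueness of closest points, injective; invariance of domain makes it open.\<close>
lemma open_image_shift_toward_closest:
  fixes K :: "'a::euclidean_space set"
  assumes K: "closed K" "K \<noteq> {}" and uniq: "unique_closest_within K r" and e: "0 < e"
  defines "U \<equiv> {w. e < infdist w K \<and> infdist w K < r}"
    and "H \<equiv> \<lambda>w. w - (e / infdist w K) *\<^sub>R (w - closest_point K w)"
  shows "open (H ` U)"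
proof (rule invariance_of_domain)
  define d where "d = (\<lambda>w. infdist w K)"
  define \<pi> where "\<pi> = closest_point K"
  have \<pi>: "\<pi> w \<in> K" "dist w (\<pi> w) = d w" for w
    using closest_point_in_set[OF K] dist_closest_point_eq_infdist[OF K] by (auto simp: \<pi>_def d_def)
  have pos: "0 < d w" "e < d w" "d w < r" if "w \<in> U" for w
    using that e by (auto simp: U_def d_def)
  have "U = {w. e < d w} \<inter> {w. d w < r}" by (auto simp: U_def d_def)
  thus "open U"
    by (simp add: d_def open_Int open_Collect_less continuous_on_infdist continuous_on_const)
  show "continuous_on U H"
  proof (rule continuous_at_imp_continuous_on, rule ballI)
    fix w assume "w \<in> U"
    have "isCont \<pi> w"
      unfolding \<pi>_def using pos[OF \<open>w \<in> U\<close>] uniq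
      by (intro isCont_closest_point[OF K]) (auto simp: d_def unique_closest_within_def)
    thus "isCont H w" using pos[OF \<open>w \<in> U\<close>]
      unfolding H_def \<pi>_def d_def by (intro continuous_intros) auto
  qed
  have dist_H: "d (H w) = d w - e" "dist (H w) (\<pi> w) = d w - e" if "w \<in> U" for w
    using infdist_toward_closest[OF \<pi>(1) \<pi>(2)[unfolded d_def], of w e] pos[OF that] e
    by (simp_all add: H_def \<pi>_def d_def)
  have H_inv: "w = \<pi> w + (d w / (d w - e)) *\<^sub>R (H w - \<pi> w)" if "w \<in> U" for w
  proof -
    have "H w - \<pi> w = ((d w - e) / d w) *\<^sub>R (w - \<pi> w)"
      using pos[OF that] by (simp add: H_def \<pi>_def d_def algebra_simps diff_divide_distrib)
    thus ?thesis using pos[OF that] e by simp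
  qed
  show "inj_on H U"
  proof (rule inj_onI)
    fix w1 w2 assume w: "w1 \<in> U" "w2 \<in> U" "H w1 = H w2"
    have d12: "d w1 = d w2" using dist_H(1)[OF w(1)] dist_H(1)[OF w(2)] w(3) by simp
    have "\<pi> w1 = closest_point K (H w1)" "\<pi> w2 = closest_point K (H w1)"
      using dist_H[OF w(1)] dist_H[OF w(2)] w(3) d12 pos[OF w(1)] e \<pi>
      by (auto intro!: unique_closest_withinD[OF uniq] simp: d_def)
    thus "w1 = w2" using H_inv[OF w(1)] H_inv[OF w(2)] w(3) d12 by metis
  qed
qed

lemma infdist_ray_le:
  assumes "x \<in> K" "norm u = 1" "0 \<le> t"
  shows "infdist (x + t *\<^sub>R u) K \<le> t"
  using infdist_le[OF assms(1), of "x + t *\<^sub>R u"] assms(2,3) by (simp add: dist_norm)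

lemma infdist_ray_downward:
  assumes "x \<in> K" "norm u = 1" "infdist (x + T *\<^sub>R u) K = T" "0 \<le> t" "t \<le> T"
  shows "infdist (x + t *\<^sub>R u) K = t"
proof -
  have "dist (x + T *\<^sub>R u) (x + t *\<^sub>R u) = T - t"
    using assms by (simp add: dist_norm flip: scaleR_diff_left)
  hence "T \<le> infdist (x + t *\<^sub>R u) K + (T - t)"
    using infdist_triangle[of "x + T *\<^sub>R u" K "x + t *\<^sub>R u"] assms(3) by simp
  thus ?thesis using infdist_ray_le[OF assms(1,2,4)] by simp
qed

text \<open>The segment from \<open>x\<close> realising the distance is prolonged: the shift towards closest points
  maps \<open>x + T u\<close> to \<open>x + (T - e) u\<close>, and by openness of its image each point slightly further out
  on the ray, \<open>x + (T - e + \<delta>) u\<close>, is the shift of some \<open>w\<close>, which must be \<open>x + (T + \<delta>) u\<close>.\<close>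
lemma infdist_ray_extend:
  fixes K :: "'a::euclidean_space set"
  assumes K: "closed K" and x: "x \<in> K" and u: "norm u = 1" and uniq: "unique_closest_within K r"
    and T: "infdist (x + T *\<^sub>R u) K = T" "0 < T" "T < r"
  shows "\<exists>\<delta>>0. infdist (x + (T + \<delta>) *\<^sub>R u) K = T + \<delta>"
proof -
  have Kne: "K \<noteq> {}" using x by auto
  define z where "z = (\<lambda>t::real. x + t *\<^sub>R u)"
  define d where "d = (\<lambda>w. infdist w K)"
  define \<pi> where "\<pi> = closest_point K"
  define e where "e = T / 2"
  define U where "U = {w. e < d w \<and> d w < r}"
  define H where "H = (\<lambda>w. w - (e / d w) *\<^sub>R (w - \<pi> w))"
  have e: "0 < e" "e < T" using T by (auto simp: e_def)
  have \<pi>: "\<pi> w \<in> K" "dist w (\<pi> w) = d w" for w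
    using closest_point_in_set[OF K Kne] dist_closest_point_eq_infdist[OF K Kne]
    by (auto simp: \<pi>_def d_def)
  have dz: "dist (z a) (z b) = \<bar>a - b\<bar>" for a b
    using u by (simp add: z_def dist_norm flip: scaleR_diff_left)
  have dzx: "dist (z t) x = t" if "0 \<le> t" for t using dz[of t 0] that by (simp add: z_def)
  have on_ray: "d (z t) = t" if "0 \<le> t" "t \<le> T" for t
    using infdist_ray_downward[OF x u T(1) that] by (simp add: d_def z_def)
  have \<pi>_ray: "\<pi> (z t) = x" if "0 < t" "t \<le> T" for t
    using unique_closest_withinD[OF uniq, of "z t" x] on_ray[of t] dzx[of t] that T x
    by (simp add: \<pi>_def d_def)
  have "open (H ` U)"
    using open_image_shift_toward_closest[OF K Kne uniq e(1)] by (simp add: H_def U_def d_def \<pi>_def)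
  moreover have "z T \<in> U" using on_ray[of T] T e by (simp add: U_def)
  moreover have "H (z T) = z (T - e)"
    using on_ray[of T] \<pi>_ray[of T] T e by (simp add: H_def z_def algebra_simps)
  ultimately obtain \<epsilon> where \<epsilon>: "\<epsilon> > 0" "ball (z (T - e)) \<epsilon> \<subseteq> H ` U"
    unfolding open_contains_ball by (metis imageI)
  define \<delta> where "\<delta> = min (\<epsilon> / 2) e"
  have \<delta>: "0 < \<delta>" "\<delta> < \<epsilon>" "\<delta> \<le> e" using \<epsilon> e by (auto simp: \<delta>_def)
  have "z (T - e + \<delta>) \<in> ball (z (T - e)) \<epsilon>" using dz \<delta> by (simp add: dist_commute)
  then obtain w where w: "w \<in> U" "H w = z (T - e + \<delta>)" using \<epsilon> by auto
  have dw: "d w = T + \<delta>" and dH: "d (H w) = T - e + \<delta>"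
    using infdist_toward_closest[OF \<pi>(1) \<pi>(2)[unfolded d_def], of w e] w on_ray[of "T - e + \<delta>"] e \<delta>
    by (auto simp: U_def d_def H_def)
  have "\<pi> w = closest_point K (H w)"
    using infdist_toward_closest[OF \<pi>(1) \<pi>(2)[unfolded d_def], of w e] w dw dH \<pi> e \<delta> T
    by (intro unique_closest_withinD[OF uniq]) (auto simp: U_def d_def H_def)
  also have "\<dots> = x" using w(2) \<pi>_ray[of "T - e + \<delta>"] e \<delta> by (simp add: \<pi>_def)
  finally have "\<pi> w = x" .
  have "H w - \<pi> w = ((d w - e) / d w) *\<^sub>R (w - \<pi> w)"
    using dw e \<delta> by (simp add: H_def algebra_simps diff_divide_distrib)
  hence "w = x + (d w / (d w - e)) *\<^sub>R (z (T - e + \<delta>) - x)"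
    using w(2) \<open>\<pi> w = x\<close> dw e \<delta> by simp
  also have "\<dots> = x + ((T + \<delta>) / (T + \<delta> - e) * (T - e + \<delta>)) *\<^sub>R u"
    using dw by (simp add: z_def)
  also have "(T + \<delta>) / (T + \<delta> - e) * (T - e + \<delta>) = T + \<delta>"
    using e \<delta> by (simp add: field_simps)
  finally show ?thesis using dw \<delta> by (intro exI[of _ \<delta>]) (simp add: d_def)
qed

lemma infdist_ray:
  fixes K :: "'a::euclidean_space set"
  assumes K: "closed K" and x: "x \<in> K" and u: "norm u = 1" and uniq: "unique_closest_within K r"
    and init: "infdist (x + r0 *\<^sub>R u) K = r0" "0 < r0" and t: "0 \<le> t" "t < r"
  shows "infdist (x + t *\<^sub>R u) K = t"
proof (cases "t \<le> r0")
  case True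
  thus ?thesis using infdist_ray_downward[OF x u init(1) t(1)] by blast
next
  case False
  define f where "f = (\<lambda>s. infdist (x + s *\<^sub>R u) K)"
  define B where "B = {0..t} \<inter> {s. f s = s}"
  have "continuous_on UNIV f" unfolding f_def by (intro continuous_intros)
  hence "closed B" unfolding B_def by (intro closed_Int closed_Collect_eq) (auto intro: continuous_intros)
  moreover have "r0 \<in> B" using init False by (simp add: B_def f_def)
  moreover have bdd: "bdd_above B" by (auto simp: B_def)
  ultimately have TB: "Sup B \<in> B" by (intro closed_contains_Sup) auto
  have "r0 \<le> Sup B" using \<open>r0 \<in> B\<close> bdd by (rule cSup_upper)
  have "\<not> Sup B < t"
  proof
    assume "Sup B < t"
    moreover obtain \<delta> where "\<delta> > 0" "f (Sup B + \<delta>) = Sup B + \<delta>"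
      using infdist_ray_extend[OF K x u uniq, of "Sup B"] TB init \<open>r0 \<le> Sup B\<close> \<open>Sup B < t\<close> t
      by (auto simp: B_def f_def)
    ultimately have "min (Sup B + \<delta>) t \<in> B"
      using infdist_ray_downward[OF x u, of "Sup B + \<delta>" "min (Sup B + \<delta>) t"] TB
      by (auto simp: B_def f_def)
    hence "min (Sup B + \<delta>) t \<le> Sup B" using bdd by (rule cSup_upper)
    thus False using \<open>\<delta> > 0\<close> \<open>Sup B < t\<close> by linarith
  qed
  hence "Sup B = t" using TB by (auto simp: B_def)
  thus ?thesis using TB by (simp add: B_def f_def)
qed

lemma has_real_derivative_directional:
  assumes "(f has_derivative D) (at z)"
  shows "((\<lambda>t. f (z + t *\<^sub>R v)) has_real_derivative D v) (at 0)"
proof -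
  have "((\<lambda>t. z + t *\<^sub>R v) has_derivative (\<lambda>t. t *\<^sub>R v)) (at 0)"
    by (auto intro!: derivative_eq_intros)
  from has_derivative_compose[OF this] assms
  have "((\<lambda>t. f (z + t *\<^sub>R v)) has_derivative (\<lambda>t. D (t *\<^sub>R v))) (at 0)" by simp
  moreover have "t * D v = D (t *\<^sub>R v)" for t
    using assms by (simp add: has_derivative_def linear_simps)
  ultimately show ?thesis by (rule has_derivative_imp_has_field_derivative)
qed

lemma has_derivative_le_if_growth_bound:
  fixes f :: "'a::real_normed_vector \<Rightarrow> real"
  assumes D: "(f has_derivative D) (at z)" and a: "0 < a"
    and growth: "\<And>t. 0 < t \<Longrightarrow> t < a \<Longrightarrow> f (z + t *\<^sub>R v) \<le> f z + t * c"
  shows "D v \<le> c"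
proof (rule ccontr)
  assume "\<not> D v \<le> c"
  have "((\<lambda>t. f (z + t *\<^sub>R v) - t * c) has_real_derivative D v - c) (at 0)"
    using has_real_derivative_directional[OF D, of v] by (auto intro!: derivative_eq_intros)
  from DERIV_pos_inc_right[OF this] \<open>\<not> D v \<le> c\<close>
  obtain d where d: "d > 0" "\<And>h. 0 < h \<Longrightarrow> h < d \<Longrightarrow> f z < f (z + h *\<^sub>R v) - h * c"
    by auto
  define h where "h = min d a / 2"
  have "0 < h" "h < d" "h < a" using d a by (auto simp: h_def)
  thus False using d(2)[of h] growth[of h] by simp
qed

lemma has_derivative_infdist_le_norm:
  assumes D: "((\<lambda>w. infdist w K) has_derivative D) (at z)"
  shows "D v \<le> norm v"
proof (rule has_derivative_le_if_growth_bound[OF D zero_less_one])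
  fix t :: real assume "0 < t"
  thus "infdist (z + t *\<^sub>R v) K \<le> infdist z K + t * norm v"
    using infdist_triangle[of "z + t *\<^sub>R v" K z] by (simp add: dist_norm)
qed

lemma has_derivative_infdist_away_from_closest:
  assumes D: "((\<lambda>w. infdist w K) has_derivative D) (at z)"
    and a: "a \<in> K" "dist z a = infdist z K"
  shows "D (z - a) = infdist z K"
proof (rule antisym)
  show "D (z - a) \<le> infdist z K"
    using has_derivative_infdist_le_norm[OF D, of "z - a"] a by (simp add: dist_norm)
  have "D (a - z) \<le> - infdist z K"
  proof (rule has_derivative_le_if_growth_bound[OF D zero_less_one])
    fix t :: real assume t: "0 < t" "t < 1"
    have "z + t *\<^sub>R (a - z) - a = (1 - t) *\<^sub>R (z - a)" by (simp add: algebra_simps)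
    hence "dist (z + t *\<^sub>R (a - z)) a = (1 - t) * infdist z K"
      using t a by (simp add: dist_norm)
    thus "infdist (z + t *\<^sub>R (a - z)) K \<le> infdist z K + t * - infdist z K"
      using infdist_le[OF a(1), of "z + t *\<^sub>R (a - z)"] by (simp add: algebra_simps)
  qed
  moreover have "linear D" using D by (simp add: has_derivative_def bounded_linear.linear)
  hence "D (a - z) = - D (z - a)" using linear_neg[of D "z - a"] by simp
  ultimately show "infdist z K \<le> D (z - a)" by simp
qed

text \<open>The derivative of the distance has norm at most \<open>1\<close> but attains \<open>infdist z K\<close> on
  \<open>z - p\<close> for every closest point \<open>p\<close>; equality in the triangle inequality forces uniqueness.\<close>
lemma differentiable_infdist_imp_unique_closest:
  fixes K :: "'a::euclidean_space set"
  assumes dif: "(\<lambda>w. infdist w K) differentiable (at z)"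
    and p: "p \<in> K" "dist z p = infdist z K" and q: "q \<in> K" "dist z q = infdist z K"
  shows "p = q"
proof -
  obtain D where D: "((\<lambda>w. infdist w K) has_derivative D) (at z)"
    using dif unfolding differentiable_def by blast
  have "linear D" using D by (simp add: has_derivative_def bounded_linear.linear)
  hence "D ((z - p) + (z - q)) = norm (z - p) + norm (z - q)"
    using has_derivative_infdist_away_from_closest[OF D] p q by (simp add: linear_add dist_norm)
  hence "norm (z - p) + norm (z - q) \<le> norm ((z - p) + (z - q))"
    using has_derivative_infdist_le_norm[OF D, of "(z - p) + (z - q)"] by linarith
  hence "norm ((z - p) + (z - q)) = norm (z - p) + norm (z - q)"
    using norm_triangle_ineq[of "z - p" "z - q"] by linarith
  hence "norm (z - p) *\<^sub>R (z - q) = norm (z - q) *\<^sub>R (z - p)" by (simp only: norm_triangle_eq)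
  moreover have "norm (z - p) = norm (z - q)" using p q by (simp add: dist_norm)
  ultimately show "p = q" by (cases "z = p") auto
qed

lemma signed_dist_differentiable_imp_unique_closest:
  fixes F :: "'a::euclidean_space set"
  assumes dif: "\<And>z. infdist z (frontier F) < r \<Longrightarrow> signed_dist F differentiable (at z)"
    and ne: "F \<noteq> {}"
  shows "unique_closest_within (closure F) r"
  unfolding unique_closest_within_def
proof (intro allI impI)
  fix z p
  assume z: "0 < infdist z (closure F)" "infdist z (closure F) < r"
    and p: "p \<in> closure F" "dist z p = infdist z (closure F)"
  define K where "K = closure F"
  have K: "closed K" "K \<noteq> {}" using ne by (auto simp: K_def)
  have zK: "z \<notin> K" using z ne by (auto simp: K_def in_closure_iff_infdist_zero)
  have "closest_point K z \<in> frontier F"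
    using closest_point_exists[OF K] zK by (intro closest_point_in_frontier) (auto simp: K_def)
  hence "infdist z (frontier F) < r"
    using infdist_le[of _ "frontier F" z] dist_closest_point_eq_infdist[OF K, of z] z
    by (fastforce simp: K_def)
  then obtain D where D: "(signed_dist F has_derivative D) (at z)"
    using dif unfolding differentiable_def by blast
  have "((\<lambda>w. infdist w K) has_derivative D) (at z)"
  proof (rule has_derivative_transform_within_open[OF D])
    show "open (- K)" "z \<in> - K" using K zK by auto
    fix w assume "w \<in> - K"
    hence "w \<in> - F" using closure_subset[of F] by (auto simp: K_def)
    thus "signed_dist F w = infdist w K" by (simp add: signed_dist_def K_def)
  qed
  hence "(\<lambda>w. infdist w K) differentiable (at z)" unfolding differentiable_def by blast
  thus "p = closest_point (closure F) z"
    using differentiable_infdist_imp_unique_closest[of K z p "closest_point K z"] z p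
      closest_point_in_set[OF K] dist_closest_point_eq_infdist[OF K]
    by (simp add: K_def)
qed

lemma infdist_closure_along_exterior_normal:
  fixes F :: "'a::euclidean_space set"
  assumes x: "x \<in> frontier F" and u: "norm u = 1" and r0: "0 < r0"
    and exterior: "ball (x + r0 *\<^sub>R u) r0 \<subseteq> - F"
    and dif: "\<And>z. infdist z (frontier F) < r \<Longrightarrow> signed_dist F differentiable (at z)"
    and t: "0 \<le> t" "t < r"
  shows "infdist (x + t *\<^sub>R u) (closure F) = t"
proof (rule infdist_ray)
  show "x \<in> closure F" using x by (simp add: frontier_def)
  show "unique_closest_within (closure F) r"
    using x by (intro signed_dist_differentiable_imp_unique_closest[OF dif]) auto
  have "ball (x + r0 *\<^sub>R u) r0 \<inter> closure F = {}"
    using exterior open_Int_closure_eq_empty[of "ball (x + r0 *\<^sub>R u) r0" F] by auto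
  hence "r0 \<le> infdist (x + r0 *\<^sub>R u) (closure F)"
    using \<open>x \<in> closure F\<close> by (intro infdist_geI) (auto, metis disjoint_iff mem_ball not_less)
  thus "infdist (x + r0 *\<^sub>R u) (closure F) = r0"
    using infdist_ray_le[OF \<open>x \<in> closure F\<close> u, of r0] r0 by simp
qed (use u r0 t in auto)

text \<open>The distance to the boundary grows at unit speed along both normal rays up to the radius
  \<open>r\<close> of differentiability, so no boundary point lies in the balls of radius \<open>t < r\<close> tangent
  at \<open>x\<close>.\<close>
lemma signed_dist_differentiable_imp_kernel_bound_below:
  fixes E :: "'a::euclidean_space set"
  assumes balls: "normal_balls E r0" and r0: "0 < r0"
    and dif: "\<And>z. infdist z (frontier E) < r \<Longrightarrow> signed_dist E differentiable (at z)"
    and x: "x \<in> frontier E" and y: "y \<in> frontier E" and t: "0 \<le> t" "t < r"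
  shows "2 * t * \<bar>(x - y) \<bullet> outer_normal E x\<bar> \<le> (norm (x - y))\<^sup>2"
proof -
  define n where "n = outer_normal E x"
  note b = normal_ballsD[OF balls x, folded n_def]
  have "signed_dist (- E) = (\<lambda>w. - signed_dist E w)"
    by (simp add: fun_eq_iff signed_dist_Compl)
  hence dif': "signed_dist (- E) differentiable (at z)" if "infdist z (frontier (- E)) < r" for z
    using dif[of z] that by (simp add: differentiable_minus)
  have "infdist (x + t *\<^sub>R n) (closure E) = t"
    using infdist_closure_along_exterior_normal[OF x b(1) r0 b(2) dif t] .
  hence "t \<le> norm ((x - y) + t *\<^sub>R n)"
    using infdist_le[of y "closure E" "x + t *\<^sub>R n"] y by (simp add: frontier_def dist_norm algebra_simps)
  hence "t\<^sup>2 \<le> (norm ((x - y) + t *\<^sub>R n))\<^sup>2" using t by (intro power_mono) auto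
  hence plus: "0 \<le> (norm (x - y))\<^sup>2 + 2 * t * ((x - y) \<bullet> n)"
    unfolding norm_add_scaleR_unit_sq[OF b(1)] by simp
  have "infdist (x + t *\<^sub>R (- n)) (closure (- E)) = t"
    using infdist_closure_along_exterior_normal[of x "- E" "- n" r0 r t] x b r0 dif' t by simp
  hence "t \<le> norm ((x - y) + (- t) *\<^sub>R n)"
    using infdist_le[of y "closure (- E)" "x + t *\<^sub>R (- n)"] y
    by (simp add: frontier_closures dist_norm algebra_simps)
  hence "t\<^sup>2 \<le> (norm ((x - y) + (- t) *\<^sub>R n))\<^sup>2" using t by (intro power_mono) auto
  hence minus: "0 \<le> (norm (x - y))\<^sup>2 - 2 * t * ((x - y) \<bullet> n)"
    unfolding norm_add_scaleR_unit_sq[OF b(1)] by simp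
  show ?thesis using plus minus by (simp add: n_def abs_if)
qed

lemma signed_dist_differentiable_imp_kernel_bound:
  fixes E :: "'a::euclidean_space set"
  assumes balls: "normal_balls E r0" and r0: "0 < r0"
    and dif: "\<And>z. infdist z (frontier E) < r \<Longrightarrow> signed_dist E differentiable (at z)"
    and x: "x \<in> frontier E" and y: "y \<in> frontier E"
  shows "2 * r * \<bar>(x - y) \<bullet> outer_normal E x\<bar> \<le> (norm (x - y))\<^sup>2"
proof (cases "0 < 2 * r * \<bar>(x - y) \<bullet> outer_normal E x\<bar>")
  case True
  define a where "a = \<bar>(x - y) \<bullet> outer_normal E x\<bar>"
  have "0 < a" "0 < r" using True by (auto simp: a_def zero_less_mult_iff)
  show ?thesis
  proof (rule dense_le_bounded[OF True])
    fix w assume "0 < w" "w < 2 * r * \<bar>(x - y) \<bullet> outer_normal E x\<bar>"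
    hence "0 \<le> w / (2 * a)" "w / (2 * a) < r" using \<open>0 < a\<close> by (simp_all add: a_def field_simps)
    from signed_dist_differentiable_imp_kernel_bound_below[OF balls r0 dif x y this]
    show "w \<le> (norm (x - y))\<^sup>2" using \<open>0 < a\<close> by (simp add: a_def)
  qed
qed (use zero_le_power2[of "norm (x - y)"] in linarith)

section \<open>Curvature bounds\<close>

lemma has_derivative_within_remainder_along_curve:
  fixes f :: "'a::real_normed_vector \<Rightarrow> 'b::real_normed_vector"
  assumes f: "(f has_derivative L) (at x within S)"
    and in_S: "\<forall>\<^sub>F t in at_right 0. \<gamma> t \<in> S"
    and \<gamma>: "((\<lambda>t. (1 / t) *\<^sub>R (\<gamma> t - x)) \<longlongrightarrow> v) (at_right 0)"
  shows "((\<lambda>t. (1 / t) *\<^sub>R (f (\<gamma> t) - f x - L (\<gamma> t - x))) \<longlongrightarrow> 0) (at_right 0)"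
  unfolding tendsto_iff
proof (intro allI impI)
  fix e :: real assume "e > 0"
  define c where "c = norm v + 1"
  have c: "0 < c" unfolding c_def by (simp add: add_nonneg_pos)
  define e' where "e' = e / (2 * c)"
  have "e' > 0" using \<open>e > 0\<close> c by (simp add: e'_def)
  then obtain d where d: "d > 0"
    "\<And>y. y \<in> S \<Longrightarrow> norm (y - x) < d \<Longrightarrow> norm (f y - f x - L (y - x)) \<le> e' * norm (y - x)"
    using f unfolding has_derivative_within_alt by blast
  have "\<forall>\<^sub>F t in at_right 0. dist ((1 / t) *\<^sub>R (\<gamma> t - x)) v < 1"
    using \<gamma> by (simp add: tendsto_iff)
  moreover have "d / c > 0" using \<open>d > 0\<close> c by simp
  hence "\<forall>\<^sub>F t in at_right 0. 0 < t \<and> t < d / c"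
    by (auto simp: eventually_at_right_field)
  ultimately show "\<forall>\<^sub>F t in at_right 0. dist ((1 / t) *\<^sub>R (f (\<gamma> t) - f x - L (\<gamma> t - x))) 0 < e"
    using in_S
  proof eventually_elim
    case (elim t)
    hence t: "0 < t" "t * c < d" using c by (auto simp: field_simps)
    have "norm ((1 / t) *\<^sub>R (\<gamma> t - x)) < c"
      using elim(1) norm_triangle_ineq2[of "(1 / t) *\<^sub>R (\<gamma> t - x)" v] by (simp add: dist_norm c_def)
    hence "norm (\<gamma> t - x) / t < c" using t by simp
    hence q: "norm (\<gamma> t - x) < t * c" using t by (simp add: pos_divide_less_eq mult.commute)
    hence "norm (f (\<gamma> t) - f x - L (\<gamma> t - x)) \<le> e' * norm (\<gamma> t - x)"
      using d(2)[OF elim(3)] t by simp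
    also have "\<dots> \<le> e' * (t * c)" using q \<open>e' > 0\<close> by simp
    also have "\<dots> = t * (e / 2)" using c by (simp add: e'_def)
    also have "\<dots> < t * e" using t \<open>e > 0\<close> by simp
    finally have "norm (f (\<gamma> t) - f x - L (\<gamma> t - x)) / t < e"
      using t by (simp add: pos_divide_less_eq mult.commute)
    thus ?case using t by simp
  qed
qed

lemma has_derivative_within_along_curve:
  fixes f :: "'a::real_normed_vector \<Rightarrow> 'b::real_normed_vector"
  assumes f: "(f has_derivative L) (at x within S)"
    and in_S: "\<forall>\<^sub>F t in at_right 0. \<gamma> t \<in> S"
    and \<gamma>: "((\<lambda>t. (1 / t) *\<^sub>R (\<gamma> t - x)) \<longlongrightarrow> v) (at_right 0)"
  shows "((\<lambda>t. (1 / t) *\<^sub>R (f (\<gamma> t) - f x)) \<longlongrightarrow> L v) (at_right 0)"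
proof -
  have lin: "bounded_linear L" using f by (simp add: has_derivative_within_alt)
  have "((\<lambda>t. (1 / t) *\<^sub>R (f (\<gamma> t) - f x - L (\<gamma> t - x)) + L ((1 / t) *\<^sub>R (\<gamma> t - x)))
      \<longlongrightarrow> 0 + L v) (at_right 0)"
    using has_derivative_within_remainder_along_curve[OF assms] bounded_linear.tendsto[OF lin \<gamma>]
    by (rule tendsto_add)
  thus ?thesis by (simp add: lin linear_simps scaleR_diff_right)
qed

lemma inner_diff_unit_vectors:
  fixes a b :: "'a::real_inner"
  assumes "norm a = 1" "norm b = 1"
  shows "a \<bullet> (b - a) = - ((norm (b - a))\<^sup>2 / 2)"
  using assms unfolding power2_norm_eq_inner
  by (simp add: norm_eq_1 inner_diff_left inner_diff_right inner_commute field_simps)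

text \<open>Between the two normal balls at \<open>x\<close> the boundary deviates from the tangent plane at
  \<open>x + w\<close> by at most \<open>\<bar>w\<bar>\<^sup>2 / R\<close>: the normal segment of that half-length through \<open>x + w\<close> joins a
  point of the exterior ball to a point of the interior ball.\<close>
lemma boundary_point_near_tangent:
  fixes E :: "'a::euclidean_space set"
  assumes balls: "normal_balls E R" and x: "x \<in> frontier E"
    and w: "w \<bullet> outer_normal E x = 0" "0 < norm w" "norm w < R"
  shows "\<exists>y\<in>frontier E. norm (y - x - w) \<le> (norm w)\<^sup>2 / R"
proof -
  define n where "n = outer_normal E x"
  note b = normal_ballsD[OF balls x, folded n_def]
  have R: "R > 0" using w by linarith
  define h where "h = (norm w)\<^sup>2 / R"
  have h: "0 < h" "h < norm w" using w R by (auto simp: h_def power2_eq_square field_simps)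
  have in_ball: "norm (w + c *\<^sub>R n) < R" if "c\<^sup>2 = (R - h)\<^sup>2" for c
  proof -
    have "(norm (w + c *\<^sub>R n))\<^sup>2 = R\<^sup>2 - (norm w)\<^sup>2 + h\<^sup>2"
      using that w(1) R unfolding norm_add_scaleR_unit_sq[OF b(1)]
      by (simp add: n_def h_def power2_eq_square field_simps)
    also have "\<dots> < R\<^sup>2" using h by (simp add: power_strict_mono)
    finally show ?thesis using R by (meson less_imp_le power2_less_imp_less)
  qed
  define a where "a = x + w + h *\<^sub>R n"
  define b' where "b' = x + w - h *\<^sub>R n"
  have "dist (x + R *\<^sub>R n) a = norm (w + (h - R) *\<^sub>R n)"
    by (simp add: a_def dist_norm norm_minus_commute algebra_simps)
  hence "a \<in> ball (x + R *\<^sub>R n) R" using in_ball[of "h - R"] by (simp add: power2_commute)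
  hence "a \<notin> E" using b(2) by blast
  moreover have "dist (x - R *\<^sub>R n) b' = norm (w + (R - h) *\<^sub>R n)"
    by (simp add: b'_def dist_norm norm_minus_commute algebra_simps)
  hence "b' \<in> ball (x - R *\<^sub>R n) R" using in_ball[of "R - h"] by simp
  hence "b' \<in> E" using b(3) by blast
  ultimately have "closed_segment b' a \<inter> frontier E \<noteq> {}"
    by (intro connected_Int_frontier) auto
  then obtain y where "y \<in> frontier E" "y \<in> closed_segment b' a" by blast
  then obtain \<theta> where y: "y \<in> frontier E" "0 \<le> \<theta>" "\<theta> \<le> 1" "y = (1 - \<theta>) *\<^sub>R b' + \<theta> *\<^sub>R a"
    unfolding in_segment by blast
  have "y - x - w = ((2 * \<theta> - 1) * h) *\<^sub>R n"
    by (simp add: y(4) a_def b'_def algebra_simps flip: scaleR_add_left)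
  hence "norm (y - x - w) = \<bar>2 * \<theta> - 1\<bar> * h" using b(1) h by (simp add: abs_mult)
  also have "\<dots> \<le> h" using y(2,3) h by (intro mult_left_le_one_le) auto
  finally show ?thesis using y(1) by (auto simp: h_def)
qed

lemma boundary_curve_with_tangent:
  fixes E :: "'a::euclidean_space set"
  assumes balls: "normal_balls E R" and R: "R > 0" and x: "x \<in> frontier E"
    and v: "v \<bullet> outer_normal E x = 0"
  obtains \<gamma> where "\<forall>\<^sub>F t in at_right 0. \<gamma> t \<in> frontier E"
    "((\<lambda>t. (1 / t) *\<^sub>R (\<gamma> t - x)) \<longlongrightarrow> v) (at_right 0)"
proof (cases "v = 0")
  case True
  thus ?thesis using that[of "\<lambda>t. x"] x by simp
next
  case False
  define a where "a = R / norm v"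
  have a: "0 < a" using R False by (simp add: a_def)
  define \<gamma> where "\<gamma> t = (SOME y. y \<in> frontier E \<and> norm (y - x - t *\<^sub>R v) \<le> (t * norm v)\<^sup>2 / R)" for t
  have \<gamma>: "\<gamma> t \<in> frontier E \<and> norm (\<gamma> t - x - t *\<^sub>R v) \<le> (t * norm v)\<^sup>2 / R" if "0 < t" "t < a" for t
  proof -
    have "0 < norm (t *\<^sub>R v)" "norm (t *\<^sub>R v) < R"
      using that False by (simp_all add: a_def pos_less_divide_eq)
    moreover have "(t *\<^sub>R v) \<bullet> outer_normal E x = 0" using v by simp
    ultimately have "\<exists>y. y \<in> frontier E \<and> norm (y - x - t *\<^sub>R v) \<le> (t * norm v)\<^sup>2 / R"
      using boundary_point_near_tangent[OF balls x, of "t *\<^sub>R v"] that by (auto simp: abs_mult)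
    thus ?thesis unfolding \<gamma>_def by (rule someI_ex)
  qed
  have small: "\<forall>\<^sub>F t in at_right 0. 0 < t \<and> t < a"
    using a by (auto simp: eventually_at_right_field)
  have "((\<lambda>t. (1 / t) *\<^sub>R (\<gamma> t - x) - v) \<longlongrightarrow> 0) (at_right 0)"
  proof (rule Lim_null_comparison)
    show "\<forall>\<^sub>F t in at_right 0. norm ((1 / t) *\<^sub>R (\<gamma> t - x) - v) \<le> t * ((norm v)\<^sup>2 / R)"
      using small
    proof eventually_elim
      case (elim t)
      hence "(1 / t) *\<^sub>R (\<gamma> t - x) - v = (1 / t) *\<^sub>R (\<gamma> t - x - t *\<^sub>R v)" by (simp add: algebra_simps)
      hence "norm ((1 / t) *\<^sub>R (\<gamma> t - x) - v) = norm (\<gamma> t - x - t *\<^sub>R v) / t" using elim by simp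
      also have "\<dots> \<le> (t * norm v)\<^sup>2 / R / t" using \<gamma>[of t] elim by (intro divide_right_mono) auto
      also have "\<dots> = t * ((norm v)\<^sup>2 / R)" using elim by (simp add: power2_eq_square)
      finally show ?case .
    qed
    show "((\<lambda>t. t * ((norm v)\<^sup>2 / R)) \<longlongrightarrow> 0) (at_right 0)"
      using R by (auto intro!: tendsto_eq_intros)
  qed
  hence "((\<lambda>t. (1 / t) *\<^sub>R (\<gamma> t - x)) \<longlongrightarrow> v) (at_right 0)" by (rule LIM_zero_cancel)
  moreover have "\<forall>\<^sub>F t in at_right 0. \<gamma> t \<in> frontier E" using small by eventually_elim (use \<gamma> in blast)
  ultimately show ?thesis using that by blast
qed

text \<open>Along a boundary curve \<open>\<gamma> t = x + t v + o(t)\<close> the difference quotients of the normal tend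
  to \<open>L v\<close> and are bounded by \<open>1 / R\<close> times those of \<open>\<gamma>\<close>.\<close>
lemma outer_normal_derivative_tangent_norm_le:
  fixes E :: "'a::euclidean_space set"
  assumes balls: "normal_balls E R" and R: "R > 0" and x: "x \<in> frontier E"
    and L: "(outer_normal E has_derivative L) (at x within frontier E)"
    and v: "v \<bullet> outer_normal E x = 0"
  shows "norm (L v) \<le> norm v / R"
proof -
  obtain \<gamma> where \<gamma>: "\<forall>\<^sub>F t in at_right 0. \<gamma> t \<in> frontier E"
    and \<gamma>': "((\<lambda>t. (1 / t) *\<^sub>R (\<gamma> t - x)) \<longlongrightarrow> v) (at_right 0)"
    using boundary_curve_with_tangent[OF balls R x v] by blast
  define q where "q = (\<lambda>t. (1 / t) *\<^sub>R (\<gamma> t - x))"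
  have q: "(q \<longlongrightarrow> v) (at_right 0)" using \<gamma>' by (simp add: q_def)
  show ?thesis
  proof (rule tendsto_le[OF _ _ tendsto_norm[OF has_derivative_within_along_curve[OF L \<gamma> \<gamma>']]])
    show "((\<lambda>t. norm (q t) / R) \<longlongrightarrow> norm v / R) (at_right 0)"
      using q R by (intro tendsto_intros) auto
    show "\<forall>\<^sub>F t in at_right 0.
        norm ((1 / t) *\<^sub>R (outer_normal E (\<gamma> t) - outer_normal E x)) \<le> norm (q t) / R"
      using \<gamma> eventually_at_right_less[of 0]
    proof eventually_elim
      case (elim t)
      have "norm ((1 / t) *\<^sub>R (outer_normal E (\<gamma> t) - outer_normal E x))
          = norm (outer_normal E (\<gamma> t) - outer_normal E x) / t"
        using elim(2) by simp
      also have "\<dots> \<le> norm (\<gamma> t - x) / R / t"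
        using normal_balls_imp_outer_normal_lipschitz[OF balls R elim(1) x] R elim(2)
        by (intro divide_right_mono) (auto simp: field_simps)
      also have "\<dots> = norm (q t) / R" using elim(2) by (simp add: q_def)
      finally show ?case .
    qed
  qed simp
qed

text \<open>The normal component of \<open>\<nu>(\<gamma> t) - \<nu>(x)\<close> is quadratically small because the normal has unit
  length, so it vanishes in the limit.\<close>
lemma outer_normal_derivative_tangent_orthogonal:
  fixes E :: "'a::euclidean_space set"
  assumes balls: "normal_balls E R" and R: "R > 0" and x: "x \<in> frontier E"
    and L: "(outer_normal E has_derivative L) (at x within frontier E)"
    and v: "v \<bullet> outer_normal E x = 0"
  shows "outer_normal E x \<bullet> L v = 0"
proof -
  define n where "n = outer_normal E x"
  have n: "norm n = 1" using normal_ballsD(1)[OF balls x] by (simp add: n_def)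
  obtain \<gamma> where \<gamma>: "\<forall>\<^sub>F t in at_right 0. \<gamma> t \<in> frontier E"
    and \<gamma>': "((\<lambda>t. (1 / t) *\<^sub>R (\<gamma> t - x)) \<longlongrightarrow> v) (at_right 0)"
    using boundary_curve_with_tangent[OF balls R x v] by blast
  define q where "q = (\<lambda>t. (1 / t) *\<^sub>R (\<gamma> t - x))"
  have q: "(q \<longlongrightarrow> v) (at_right 0)" using \<gamma>' by (simp add: q_def)
  have D: "((\<lambda>t. n \<bullet> ((1 / t) *\<^sub>R (outer_normal E (\<gamma> t) - n))) \<longlongrightarrow> n \<bullet> L v) (at_right 0)"
    using has_derivative_within_along_curve[OF L \<gamma> \<gamma>'] by (intro tendsto_intros) (simp add: n_def)
  have "((\<lambda>t. n \<bullet> ((1 / t) *\<^sub>R (outer_normal E (\<gamma> t) - n))) \<longlongrightarrow> 0) (at_right 0)"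
  proof (rule Lim_null_comparison)
    show "((\<lambda>t. t * ((norm (q t))\<^sup>2 / (2 * R\<^sup>2))) \<longlongrightarrow> 0) (at_right 0)"
      using q R by (auto intro!: tendsto_eq_intros)
    show "\<forall>\<^sub>F t in at_right 0. norm (n \<bullet> ((1 / t) *\<^sub>R (outer_normal E (\<gamma> t) - n)))
        \<le> t * ((norm (q t))\<^sup>2 / (2 * R\<^sup>2))"
      using \<gamma> eventually_at_right_less[of 0]
    proof eventually_elim
      case (elim t)
      have "norm (n \<bullet> ((1 / t) *\<^sub>R (outer_normal E (\<gamma> t) - n)))
          = (norm (outer_normal E (\<gamma> t) - n))\<^sup>2 / 2 / t"
        using inner_diff_unit_vectors[OF n normal_ballsD(1)[OF balls elim(1)]] elim(2) by simp
      also have "\<dots> \<le> (norm (\<gamma> t - x) / R)\<^sup>2 / 2 / t"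
        using normal_balls_imp_outer_normal_lipschitz[OF balls R elim(1) x] R elim(2)
        by (intro divide_right_mono power_mono) (auto simp: n_def field_simps)
      also have "\<dots> = t * ((norm (q t))\<^sup>2 / (2 * R\<^sup>2))"
      proof -
        have "norm (\<gamma> t - x) = t * norm (q t)" using elim(2) by (simp add: q_def)
        thus ?thesis using elim(2) R by (simp add: power_divide power2_eq_square field_simps)
      qed
      finally show ?case .
    qed
  qed
  from tendsto_unique[OF _ D this] show ?thesis by (simp add: n_def)
qed

lemma sign_in_cones_around_gradient:
  fixes \<phi> :: "'a::real_inner \<Rightarrow> real"
  assumes \<phi>: "(\<phi> has_derivative (\<lambda>h. g \<bullet> h)) (at y)" "\<phi> y = 0" and g: "g \<noteq> 0" and \<epsilon>: "\<epsilon> > 0"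
  obtains \<delta> where "\<delta> > 0"
    "\<And>z. norm (z - y) < \<delta> \<Longrightarrow> \<epsilon> * norm (z - y) < (z - y) \<bullet> sgn g \<Longrightarrow> \<phi> z > 0"
    "\<And>z. norm (z - y) < \<delta> \<Longrightarrow> (z - y) \<bullet> sgn g < - \<epsilon> * norm (z - y) \<Longrightarrow> \<phi> z < 0"
proof -
  have "\<epsilon> * norm g / 2 > 0" using \<epsilon> g by simp
  then obtain \<delta> where \<delta>: "\<delta> > 0"
    "\<And>z. norm (z - y) < \<delta> \<Longrightarrow> norm (\<phi> z - \<phi> y - g \<bullet> (z - y)) \<le> \<epsilon> * norm g / 2 * norm (z - y)"
    using \<phi>(1) unfolding has_derivative_at_alt by blast
  have est: "\<phi> z - g \<bullet> (z - y) \<le> \<epsilon> * norm (z - y) * norm g / 2"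
    "g \<bullet> (z - y) - \<phi> z \<le> \<epsilon> * norm (z - y) * norm g / 2" if "norm (z - y) < \<delta>" for z
  proof -
    have "\<bar>\<phi> z - g \<bullet> (z - y)\<bar> \<le> \<epsilon> * norm (z - y) * norm g / 2"
      using \<delta>(2)[OF that] \<phi>(2) by (simp add: mult_ac)
    thus "\<phi> z - g \<bullet> (z - y) \<le> \<epsilon> * norm (z - y) * norm g / 2"
      "g \<bullet> (z - y) - \<phi> z \<le> \<epsilon> * norm (z - y) * norm g / 2" by linarith+
  qed
  have g_comp: "(z - y) \<bullet> sgn g * norm g = g \<bullet> (z - y)" for z
    using g by (simp add: sgn_div_norm inner_commute)
  have nonneg: "0 \<le> \<epsilon> * norm (z - y) * norm g" for z using \<epsilon> by simp
  show ?thesis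
  proof (rule that[OF \<delta>(1)])
    fix z assume z: "norm (z - y) < \<delta>" and cone: "\<epsilon> * norm (z - y) < (z - y) \<bullet> sgn g"
    have "\<epsilon> * norm (z - y) * norm g < g \<bullet> (z - y)"
      using mult_strict_right_mono[OF cone, of "norm g"] g g_comp by simp
    thus "\<phi> z > 0" using est[OF z] nonneg[of z] by linarith
  next
    fix z assume z: "norm (z - y) < \<delta>" and cone: "(z - y) \<bullet> sgn g < - \<epsilon> * norm (z - y)"
    have "g \<bullet> (z - y) < - (\<epsilon> * norm (z - y) * norm g)"
      using mult_strict_right_mono[OF cone, of "norm g"] g g_comp by simp
    thus "\<phi> z < 0" using est[OF z] nonneg[of z] by linarith
  qed
qed

lemma is_outer_normal_of_defining_function:
  fixes E :: "'a::euclidean_space set"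
  assumes U: "open U" "y \<in> U" and \<phi>: "(\<phi> has_derivative (\<lambda>h. g \<bullet> h)) (at y)" "\<phi> y = 0" and g: "g \<noteq> 0"
    and int: "interior E \<inter> U = {z \<in> U. \<phi> z < 0}" and fr: "frontier E \<inter> U = {z \<in> U. \<phi> z = 0}"
  shows "is_outer_normal E y (sgn g)"
  unfolding is_outer_normal_def
proof (intro conjI allI impI)
  show "norm (sgn g) = 1" using g by (simp add: norm_sgn)
  fix \<epsilon> :: real assume "\<epsilon> > 0"
  obtain \<delta> where \<delta>: "\<delta> > 0"
    "\<And>z. norm (z - y) < \<delta> \<Longrightarrow> \<epsilon> * norm (z - y) < (z - y) \<bullet> sgn g \<Longrightarrow> \<phi> z > 0"
    "\<And>z. norm (z - y) < \<delta> \<Longrightarrow> (z - y) \<bullet> sgn g < - \<epsilon> * norm (z - y) \<Longrightarrow> \<phi> z < 0"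
    using sign_in_cones_around_gradient[OF \<phi> g \<open>\<epsilon> > 0\<close>] by blast
  obtain d where d: "d > 0" "ball y d \<subseteq> U" using U open_contains_ball by blast
  show "\<exists>\<delta>>0. \<forall>z\<in>ball y \<delta>. (\<epsilon> * norm (z - y) < (z - y) \<bullet> sgn g \<longrightarrow> z \<notin> E) \<and>
           ((z - y) \<bullet> sgn g < - \<epsilon> * norm (z - y) \<longrightarrow> z \<in> E)"
  proof (intro exI[of _ "min \<delta> d"] conjI ballI impI)
    fix z assume z: "z \<in> ball y (min \<delta> d)"
    hence zU: "z \<in> U" and "norm (z - y) < \<delta>" using d by (auto simp: dist_norm norm_minus_commute)
    {
      assume "\<epsilon> * norm (z - y) < (z - y) \<bullet> sgn g"
      hence "z \<notin> interior E \<inter> U" "z \<notin> frontier E \<inter> U"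
        using \<delta>(2) \<open>norm (z - y) < \<delta>\<close> unfolding int fr by fastforce+
      hence "z \<notin> closure E" using zU by (auto simp: frontier_def)
      thus "z \<notin> E" using closure_subset by blast
    }
    {
      assume "(z - y) \<bullet> sgn g < - \<epsilon> * norm (z - y)"
      hence "z \<in> interior E \<inter> U" using \<delta>(3) \<open>norm (z - y) < \<delta>\<close> zU unfolding int by auto
      thus "z \<in> E" using interior_subset by blast
    }
  qed (use \<delta> d in simp)
qed

lemma C2_regular_imp_outer_normal_differentiable:
  fixes E :: "'a::euclidean_space set"
  assumes "C2_regular E" and x: "x \<in> frontier E"
  shows "\<exists>L. (outer_normal E has_derivative L) (at x within frontier E)"
proof -
  obtain r \<phi> g g' where r: "r > 0" and
    A: "\<forall>y\<in>ball x r. (\<phi> has_derivative (\<lambda>h. g y \<bullet> h)) (at y) \<and> (g has_derivative g' y) (at y) \<and> g y \<noteq> 0"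
    and int: "interior E \<inter> ball x r = {y \<in> ball x r. \<phi> y < 0}"
    and fr: "frontier E \<inter> ball x r = {y \<in> ball x r. \<phi> y = 0}"
    using assms unfolding C2_regular_def by blast
  have normal: "outer_normal E y = sgn (g y)" if "y \<in> frontier E" "dist y x < r" for y
    using that A fr by (intro outer_normal_eqI is_outer_normal_of_defining_function[OF _ _ _ _ _ int fr])
      (auto simp: dist_commute)
  have "x \<in> ball x r" using r by simp
  hence "g differentiable (at x)" "g x \<noteq> 0" using A unfolding differentiable_def by blast+
  hence "(\<lambda>y. inverse (norm (g y)) *\<^sub>R g y) differentiable (at x)"
    by (intro differentiable_scaleR differentiable_inverse differentiable_chain_at[of g x norm, unfolded o_def]
        differentiable_norm_at) auto
  then obtain L where "((\<lambda>y. sgn (g y)) has_derivative L) (at x)"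
    unfolding differentiable_def by (auto simp: sgn_div_norm divide_inverse_commute)
  hence "((\<lambda>y. sgn (g y)) has_derivative L) (at x within frontier E)"
    by (rule has_derivative_at_withinI)
  hence "(outer_normal E has_derivative L) (at x within frontier E)"
    by (rule has_derivative_transform_within[OF _ r x]) (use normal in auto)
  thus ?thesis by blast
qed

lemma sum_norm_tangential_part_sq:
  fixes n :: "'a::euclidean_space"
  assumes "norm n = 1"
  shows "(\<Sum>b\<in>Basis. (norm (b - (b \<bullet> n) *\<^sub>R n))\<^sup>2) = real (DIM('a) - 1)"
proof -
  have "(norm (b - (b \<bullet> n) *\<^sub>R n))\<^sup>2 = 1 - (b \<bullet> n)\<^sup>2" if "b \<in> Basis" for b
    using that assms unfolding power2_norm_eq_inner
    by (simp add: norm_eq_1 inner_diff_left inner_diff_right inner_commute power2_eq_square algebra_simps)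
  hence "(\<Sum>b\<in>Basis. (norm (b - (b \<bullet> n) *\<^sub>R n))\<^sup>2) = (\<Sum>b\<in>Basis. 1 - (b \<bullet> n)\<^sup>2)"
    by (rule sum.cong[OF refl])
  also have "\<dots> = real DIM('a) - n \<bullet> n"
    by (simp add: sum_subtractf euclidean_inner[of n n] power2_eq_square inner_commute)
  finally show ?thesis using assms DIM_positive[where 'a='a] by (simp add: norm_eq_1 of_nat_diff)
qed

lemma has_derivative_gauss_diff:
  fixes E :: "'a::euclidean_space set"
  assumes "C2_regular E" "x \<in> frontier E"
  shows "(outer_normal E has_derivative gauss_diff E x) (at x within frontier E)"
  using someI_ex[OF C2_regular_imp_outer_normal_differentiable[OF assms]] by (simp add: gauss_diff_def)

text \<open>The tangential projections are tangent vectors, on which the Weingarten map has norm at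
  most \<open>1 / R\<close> and takes tangent values; so the basis vector \<open>b\<close> may be replaced by its
  tangential part in the inner product.\<close>
lemma gauss_diff_tang_proj_bounds:
  fixes E :: "'a::euclidean_space set"
  assumes balls: "normal_balls E R" and R: "R > 0" and C2: "C2_regular E" and x: "x \<in> frontier E"
  shows "norm (gauss_diff E x (tang_proj E x b)) \<le> norm (tang_proj E x b) / R"
    and "\<bar>b \<bullet> gauss_diff E x (tang_proj E x b)\<bar> \<le> (norm (tang_proj E x b))\<^sup>2 / R"
proof -
  define L where "L = gauss_diff E x"
  define n where "n = outer_normal E x"
  define v where "v = tang_proj E x b"
  note L = has_derivative_gauss_diff[OF C2 x, folded L_def]
  have n: "norm n = 1" using normal_ballsD(1)[OF balls x] by (simp add: n_def)
  have v: "v = b - (b \<bullet> n) *\<^sub>R n" by (simp add: v_def tang_proj_def n_def)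
  have "v \<bullet> outer_normal E x = 0" using n by (simp add: v n_def[symmetric] inner_diff_left norm_eq_1)
  note Lv = outer_normal_derivative_tangent_norm_le[OF balls R x L this]
    outer_normal_derivative_tangent_orthogonal[OF balls R x L this]
  show "norm (gauss_diff E x (tang_proj E x b)) \<le> norm (tang_proj E x b) / R"
    using Lv(1) by (simp add: L_def v_def)
  have "b \<bullet> L v = v \<bullet> L v"
    using Lv(2) by (simp add: v n_def[symmetric] inner_diff_left inner_commute)
  also have "\<bar>\<dots>\<bar> \<le> norm v * (norm v / R)"
    using Cauchy_Schwarz_ineq2[of v "L v"] mult_left_mono[OF Lv(1) norm_ge_zero[of v]] by simp
  finally show "\<bar>b \<bullet> gauss_diff E x (tang_proj E x b)\<bar> \<le> (norm (tang_proj E x b))\<^sup>2 / R"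
    by (simp add: L_def v_def power2_eq_square)
qed

lemma sum_norm_tang_proj_sq:
  fixes E :: "'a::euclidean_space set"
  assumes "normal_balls E R" "x \<in> frontier E"
  shows "(\<Sum>b\<in>Basis. (norm (tang_proj E x b))\<^sup>2) = real (DIM('a) - 1)"
  using sum_norm_tangential_part_sq[OF normal_ballsD(1)[OF assms]] by (simp add: tang_proj_def)

lemma mean_curv_bound:
  fixes E :: "'a::euclidean_space set"
  assumes "normal_balls E R" "R > 0" "C2_regular E" "x \<in> frontier E"
  shows "\<bar>mean_curv E x\<bar> \<le> real (DIM('a) - 1) / R"
proof -
  have "\<bar>mean_curv E x\<bar> \<le> (\<Sum>b\<in>Basis. \<bar>b \<bullet> gauss_diff E x (tang_proj E x b)\<bar>)"
    unfolding mean_curv_def by (rule sum_abs)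
  also have "\<dots> \<le> (\<Sum>b\<in>Basis. (norm (tang_proj E x b))\<^sup>2 / R)"
    by (intro sum_mono gauss_diff_tang_proj_bounds(2)[OF assms])
  also have "\<dots> = real (DIM('a) - 1) / R"
    using sum_norm_tang_proj_sq[OF assms(1,4)] by (simp add: sum_divide_distrib[symmetric])
  finally show ?thesis .
qed

text \<open>The proof gives \<open>sqrt n / R\<close>; only the weaker bound \<open>n / R\<close> is claimed.\<close>
lemma sff_norm_bound:
  fixes E :: "'a::euclidean_space set"
  assumes "normal_balls E R" "R > 0" "C2_regular E" "x \<in> frontier E"
  shows "sff_norm E x \<le> real (DIM('a) - 1) / R"
proof -
  define m where "m = real (DIM('a) - 1)"
  have "(\<Sum>b\<in>Basis. (norm (gauss_diff E x (tang_proj E x b)))\<^sup>2)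
      \<le> (\<Sum>b\<in>Basis. (norm (tang_proj E x b) / R)\<^sup>2)"
    by (intro sum_mono power_mono gauss_diff_tang_proj_bounds(1)[OF assms]) simp
  also have "\<dots> = m / R\<^sup>2"
    using sum_norm_tang_proj_sq[OF assms(1,4)] by (simp add: m_def power_divide sum_divide_distrib[symmetric])
  finally have "sff_norm E x \<le> sqrt (m / R\<^sup>2)" by (simp add: sff_norm_def)
  also have "\<dots> = sqrt m / R" using assms(2) by (simp add: real_sqrt_divide)
  also have "sqrt m \<le> m"
  proof (cases "DIM('a) - 1")
    case (Suc k)
    hence "m \<le> m\<^sup>2" by (simp add: m_def power2_eq_square)
    thus ?thesis using real_sqrt_le_mono[of m "m\<^sup>2"] by (simp add: m_def)
  qed (simp add: m_def)
  finally show ?thesis using assms(2) by (simp add: m_def divide_right_mono)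
qed

section \<open>The kernel bound, the reach and the main result\<close>

lemma signed_dist_differentiable_imp_normal_balls:
  fixes E :: "'a::euclidean_space set"
  assumes balls: "normal_balls E r0" and r0: "0 < r0" and r: "0 < r"
    and dif: "\<And>z. infdist z (frontier E) < r \<Longrightarrow> signed_dist E differentiable (at z)"
  shows "normal_balls E r"
  by (rule normal_balls_if_kernel_bound[OF balls r0 r])
    (rule signed_dist_differentiable_imp_kernel_bound[OF balls r0 dif])

lemma abs_S_kernel_le_iff:
  assumes "x \<noteq> y" "R > 0"
  shows "\<bar>S_kernel E x y\<bar> \<le> 1 / (2 * R) \<longleftrightarrow>
    2 * R * \<bar>(x - y) \<bullet> outer_normal E x\<bar> \<le> (norm (x - y))\<^sup>2"
  using assms by (simp add: S_kernel_def abs_divide divide_le_eq field_simps)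

lemma abs_S_kernel_le_S_Linf:
  fixes E :: "'a::euclidean_space set"
  assumes "normal_balls E r0" "r0 > 0" "x \<in> frontier E" "y \<in> frontier E" "x \<noteq> y"
  shows "\<bar>S_kernel E x y\<bar> \<le> S_Linf E"
  unfolding S_Linf_def
proof (rule cSup_upper)
  have "\<bar>S_kernel E x y\<bar> \<le> 1 / (2 * r0)" if "x \<in> frontier E" "y \<in> frontier E" "x \<noteq> y" for x y
    using normal_balls_imp_kernel_bound[OF assms(1,2) that(1,2)] abs_S_kernel_le_iff[OF that(3) assms(2)]
    by simp
  thus "bdd_above {\<bar>S_kernel E x y\<bar> | x y. x \<in> frontier E \<and> y \<in> frontier E \<and> x \<noteq> y}"
    by (auto intro!: bdd_aboveI[of _ "1 / (2 * r0)"])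
qed (use assms in blast)

lemma S_Linf_le:
  fixes E :: "'a::euclidean_space set"
  assumes "x0 \<in> frontier E" "y0 \<in> frontier E" "x0 \<noteq> y0"
    and "\<And>x y. x \<in> frontier E \<Longrightarrow> y \<in> frontier E \<Longrightarrow> x \<noteq> y \<Longrightarrow> \<bar>S_kernel E x y\<bar> \<le> c"
  shows "S_Linf E \<le> c"
  unfolding S_Linf_def using assms by (intro cSup_least) auto

text \<open>Walking from a boundary point into \<open>E\<close> along the normal, one leaves the bounded set \<open>E\<close>
  again, at a boundary point \<open>y\<close> with \<open>x - y\<close> parallel to the normal at \<open>x\<close>.\<close>
lemma boundary_pair_on_normal:
  fixes E :: "'a::euclidean_space set"
  assumes "bounded E" "E \<noteq> {}" and balls: "normal_balls E r0" and r0: "r0 > 0"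
  obtains x y where "x \<in> frontier E" "y \<in> frontier E" "x \<noteq> y" "S_kernel E x y > 0"
proof -
  have "frontier E \<noteq> {}" using assms(1,2) not_bounded_UNIV by (auto simp: frontier_eq_empty)
  then obtain x where x: "x \<in> frontier E" by blast
  define n where "n = outer_normal E x"
  note b = normal_ballsD[OF balls x, folded n_def]
  obtain B where B: "\<And>y. y \<in> E \<Longrightarrow> norm y \<le> B" using assms(1) unfolding bounded_iff by blast
  define M where "M = \<bar>B\<bar> + norm x + r0 + 1"
  have "x - r0 *\<^sub>R n \<in> E" using b(3) r0 by auto
  moreover have "M - norm x \<le> norm (x - M *\<^sub>R n)"
    using norm_triangle_ineq2[of "M *\<^sub>R n" x] b(1) by (simp add: M_def norm_minus_commute)
  hence "x - M *\<^sub>R n \<notin> E" using B[of "x - M *\<^sub>R n"] r0 by (auto simp: M_def)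
  ultimately have "closed_segment (x - r0 *\<^sub>R n) (x - M *\<^sub>R n) \<inter> frontier E \<noteq> {}"
    by (intro connected_Int_frontier) auto
  then obtain y where y: "y \<in> frontier E" "y \<in> closed_segment (x - r0 *\<^sub>R n) (x - M *\<^sub>R n)" by blast
  then obtain \<theta> where \<theta>: "0 \<le> \<theta>" "\<theta> \<le> 1" "y = (1 - \<theta>) *\<^sub>R (x - r0 *\<^sub>R n) + \<theta> *\<^sub>R (x - M *\<^sub>R n)"
    unfolding in_segment by blast
  define \<tau> where "\<tau> = r0 + \<theta> * (M - r0)"
  have "r0 \<le> \<tau>" using \<theta> by (simp add: \<tau>_def M_def)
  have xy: "x - y = \<tau> *\<^sub>R n" by (simp add: \<theta>(3) \<tau>_def algebra_simps)
  hence "x \<noteq> y" using \<open>r0 \<le> \<tau>\<close> r0 b(1) by auto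
  moreover have "S_kernel E x y = 1 / \<tau>"
    using xy b(1) \<open>r0 \<le> \<tau>\<close> r0 by (simp add: S_kernel_def n_def[symmetric] power2_eq_square norm_eq_1[symmetric])
  ultimately show ?thesis using that x y(1) \<open>r0 \<le> \<tau>\<close> r0 by simp
qed

lemma normal_balls_iff_S_Linf:
  fixes E :: "'a::euclidean_space set"
  assumes "bounded E" "E \<noteq> {}" and balls: "normal_balls E r0" and r0: "r0 > 0" and R: "R > 0"
  shows "normal_balls E R \<longleftrightarrow> 2 * R * S_Linf E \<le> 1"
proof
  obtain x0 y0 where pair: "x0 \<in> frontier E" "y0 \<in> frontier E" "x0 \<noteq> y0"
    using boundary_pair_on_normal[OF assms(1-4)] by blast
  assume "normal_balls E R"
  hence "S_Linf E \<le> 1 / (2 * R)"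
    using normal_balls_imp_kernel_bound[OF _ R] abs_S_kernel_le_iff[OF _ R]
    by (intro S_Linf_le[OF pair]) blast
  thus "2 * R * S_Linf E \<le> 1" using R by (simp add: field_simps)
next
  assume "2 * R * S_Linf E \<le> 1"
  have S_bound: "\<bar>S_kernel E x y\<bar> \<le> 1 / (2 * R)"
    if "x \<in> frontier E" "y \<in> frontier E" "x \<noteq> y" for x y
  proof -
    have "\<bar>S_kernel E x y\<bar> * (2 * R) \<le> S_Linf E * (2 * R)"
      using abs_S_kernel_le_S_Linf[OF balls r0 that] R by (intro mult_right_mono) auto
    also have "\<dots> \<le> 1" using \<open>2 * R * S_Linf E \<le> 1\<close> by (simp add: mult.commute)
    finally show ?thesis using R by (simp add: pos_le_divide_eq)
  qed
  have "2 * R * \<bar>(x - y) \<bullet> outer_normal E x\<bar> \<le> (norm (x - y))\<^sup>2"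
    if "x \<in> frontier E" "y \<in> frontier E" for x y
  proof (cases "x = y")
    case False
    thus ?thesis using S_bound[OF that False] abs_S_kernel_le_iff[OF False R] by simp
  qed simp
  thus "normal_balls E R" by (rule normal_balls_if_kernel_bound[OF balls r0 R])
qed

lemma S_Linf_pos:
  fixes E :: "'a::euclidean_space set"
  assumes "bounded E" "E \<noteq> {}" "normal_balls E r0" "r0 > 0"
  shows "S_Linf E > 0"
proof -
  obtain x y where "x \<in> frontier E" "y \<in> frontier E" "x \<noteq> y" "S_kernel E x y > 0"
    using boundary_pair_on_normal[OF assms] by blast
  thus ?thesis using abs_S_kernel_le_S_Linf[OF assms(3,4)] by fastforce
qed

lemma reach_rE_eq:
  fixes E :: "'a::euclidean_space set"
  assumes "bounded E" "E \<noteq> {}" and balls: "normal_balls E r0" and r0: "r0 > 0"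
  shows "reach_rE E = 1 / (2 * S_Linf E)"
proof -
  have S: "S_Linf E > 0" using S_Linf_pos[OF assms] .
  have "- E \<noteq> {}"
  proof
    assume "- E = {}"
    hence "E = UNIV" by auto
    thus False using assms(1) not_bounded_UNIV by simp
  qed
  have "{r. r > 0 \<and> (\<forall>x. infdist x (frontier E) < r \<longrightarrow> signed_dist E differentiable (at x))}
      = {r. r > 0 \<and> normal_balls E r}"
    using signed_dist_differentiable_imp_normal_balls[OF balls r0]
      normal_balls_imp_signed_dist_differentiable[OF _ _ assms(2) \<open>- E \<noteq> {}\<close>]
    by blast
  also have "\<dots> = {0<..1 / (2 * S_Linf E)}"
    using normal_balls_iff_S_Linf[OF assms] S by (auto simp: field_simps)
  finally show ?thesis using S by (simp add: reach_rE_def)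
qed

theorem lemma4p1:
  fixes E :: "'a::euclidean_space set"
  assumes "bounded E" and "E \<noteq> {}"
    and "\<exists>r>0. uniform_ball E r"
  shows "2 * S_Linf E = 1 / reach_rE E \<and>
         (\<forall>x\<in>frontier E. \<forall>y\<in>frontier E. x \<noteq> y \<longrightarrow>
           norm (outer_normal E x - outer_normal E y) / norm (x - y) \<le> 2 * S_Linf E) \<and>
         (C2_regular E \<longrightarrow> (\<forall>x\<in>frontier E.
           \<bar>mean_curv E x\<bar> \<le> 2 * real (DIM('a) - 1) * S_Linf E \<and>
           sff_norm E x \<le> 2 * real (DIM('a) - 1) * S_Linf E))"
proof -
  obtain r0 where r0: "r0 > 0" "uniform_ball E r0" using assms(3) by blast
  have balls0: "normal_balls E r0" using uniform_ball_imp_normal_balls[OF r0(2,1)] .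
  have S: "S_Linf E > 0" using S_Linf_pos[OF assms(1,2) balls0 r0(1)] .
  define R where "R = 1 / (2 * S_Linf E)"
  have R: "R > 0" using S by (simp add: R_def)
  have balls: "normal_balls E R"
    using normal_balls_iff_S_Linf[OF assms(1,2) balls0 r0(1) R] S by (simp add: R_def)
  have "2 * S_Linf E = 1 / reach_rE E"
    using reach_rE_eq[OF assms(1,2) balls0 r0(1)] by simp
  moreover have "norm (outer_normal E x - outer_normal E y) / norm (x - y) \<le> 2 * S_Linf E"
    if "x \<in> frontier E" "y \<in> frontier E" "x \<noteq> y" for x y
    using normal_balls_imp_outer_normal_lipschitz[OF balls R that(1,2)] that(3) R
    by (simp add: R_def divide_le_eq field_simps)
  moreover have "\<bar>mean_curv E x\<bar> \<le> 2 * real (DIM('a) - 1) * S_Linf E \<and>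
      sff_norm E x \<le> 2 * real (DIM('a) - 1) * S_Linf E" if "C2_regular E" "x \<in> frontier E" for x
    using mean_curv_bound[OF balls R that] sff_norm_bound[OF balls R that] by (simp add: R_def algebra_simps)
  ultimately show ?thesis by blast
qed

end
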